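(* Let $\mathcal{A}$ be a nonnegative weakly irreducible tensor of order $m$ and dimension $n$ which is spectral $\ell$-symmetric. Then $(\mathbb{P}\mathbb{V},\circ)$ is an abelian group which contains $\mathbb{P}\mathbb{V}_0$ as a subgroup and $\mathbb{P}\mathbb{V}_j$ as a coset of $\mathbb{P}\mathbb{V}_0$ for each $j\in[\ell-1]$, and the map $\Psi:\mathbb{P}\mathbb{V}\to\mathfrak{D}$, $y\mapsto D_y$, is a group isomorphism which sends $\mathbb{P}\mathbb{V}_j$ onto $\mathfrak{D}^{(j)}$ for $j=0,1,\ldots,\ell-1$.
   Context: Tensors: order $m$, dimension $n$, entries $a_{i_1\cdots i_m}$, $i_k\in[n]$. For $x\in\mathbb{C}^n$, $(\mathcal{A}x^{m-1})_i=\sum_{i_2,\dots,i_m}a_{ii_2\cdots i_m}x_{i_2}\cdots x_{i_m}$, $x^{[m-1]}=(x_i^{m-1})_i$; $\lambda$ is an eigenvalue with eigenvector $x\ne0$ if $\mathcal{A}x^{m-1}=\lambda x^{[m-1]}$. Spectrum $\mathrm{Spec}(\mathcal{A})$: multiset of roots of $\det(\lambda\mathcal{I}-\mathcal{A})$ (resultant-based characteristic polynomial); $\rho(\mathcal{A})$: largest modulus of an eigenvalue. Weakly irreducible: the digraph on $[n]$ with arc $(i,j)$ whenever some $a_{ii_2\cdots i_m}\neq0$ with $j\in\{i_2,\dots,i_m\}$ is strongly connected. Spectral $\ell$-symmetric: $\mathrm{Spec}(\mathcal{A})=e^{\mathrm{i}2\pi/\ell}\mathrm{Spec}(\mathcal{A})$.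 For diagonal $P,Q$, $(P\mathcal{A}Q)_{i_1\cdots i_m}=p_{i_1}a_{i_1\cdots i_m}q_{i_2}\cdots q_{i_m}$. $\mathfrak{D}^{(j)}$ ($j=0,\dots,\ell-1$) is the set of invertible diagonal $D$ with $d_{11}=1$ and $\mathcal{A}=e^{-\mathrm{i}2\pi j/\ell}D^{-(m-1)}\mathcal{A}D$, and $\mathfrak{D}=\bigcup_j\mathfrak{D}^{(j)}$. Known facts: for nonnegative weakly irreducible $\mathcal{A}$, $\rho(\mathcal{A})$ is an eigenvalue with a positive eigenvector unique up to scaling, and every eigenvector for an eigenvalue of modulus $\rho(\mathcal{A})$ has no zero entries. Let $\lambda_j=\rho(\mathcal{A})e^{\mathrm{i}2\pi j/\ell}$ and let $\mathbb{P}\mathbb{V}_j$ be the set of eigenvectors $y$ of $\mathcal{A}$ for $\lambda_j$ normalized so that $y_1=1$ (one representative per projective eigenvector); $\mathbb{P}\mathbb{V}=\bigcup_{j=0}^{\ell-1}\mathbb{P}\mathbb{V}_j$. Let $v_p\in\mathbb{P}\mathbb{V}_0$ be the positive one. For $y\in\mathbb{P}\mathbb{V}$, $D_y=\mathrm{diag}(y_1/|y_1|,\dots,y_n/|y_n|)$, and $y\circ\hat y:=D_yD_{\hat y}v_p$. *)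

theory Defs
  imports "Jordan_Normal_Form.Matrix" "HOL-Algebra.Coset"
begin

text \<open>Conventions: indices run over {0..<n} (index 0 plays the role of index 1 in the paper).
A tensor of order m and dimension n with real entries is a function on index lists;
only lists of length m with entries < n are relevant.\<close>

definition tidx :: "nat \<Rightarrow> nat \<Rightarrow> nat list set" where
  "tidx k n = {is. length is = k \<and> set is \<subseteq> {..<n}}"

definition tensor_nonneg :: "nat \<Rightarrow> nat \<Rightarrow> (nat list \<Rightarrow> real) \<Rightarrow> bool" where
  "tensor_nonneg m n A \<longleftrightarrow> (\<forall>is \<in> tidx m n. 0 \<le> A is)"

definition tensor_apply :: "nat \<Rightarrow> nat \<Rightarrow> (nat list \<Rightarrow> real) \<Rightarrow> complex vec \<Rightarrow> complex vec" where
  "tensor_apply m n A x = vec n (\<lambda>i. \<Sum>is \<in> tidx (m - 1) n.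
      complex_of_real (A (i # is)) * prod_list (map (\<lambda>k. x $ k) is))"

definition vpow :: "nat \<Rightarrow> complex vec \<Rightarrow> complex vec" where
  "vpow k x = map_vec (\<lambda>t. t ^ k) x"

definition is_eigenpair :: "nat \<Rightarrow> nat \<Rightarrow> (nat list \<Rightarrow> real) \<Rightarrow> complex \<Rightarrow> complex vec \<Rightarrow> bool" where
  "is_eigenpair m n A lam x \<longleftrightarrow> x \<in> carrier_vec n \<and> x \<noteq> 0\<^sub>v n \<and>
      tensor_apply m n A x = lam \<cdot>\<^sub>v vpow (m - 1) x"

definition eigenvalues :: "nat \<Rightarrow> nat \<Rightarrow> (nat list \<Rightarrow> real) \<Rightarrow> complex set" where
  "eigenvalues m n A = {lam. \<exists>x. is_eigenpair m n A lam x}"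

definition spec_radius :: "nat \<Rightarrow> nat \<Rightarrow> (nat list \<Rightarrow> real) \<Rightarrow> real" where
  "spec_radius m n A = Sup (cmod ` eigenvalues m n A)"

definition tensor_arcs :: "nat \<Rightarrow> nat \<Rightarrow> (nat list \<Rightarrow> real) \<Rightarrow> (nat \<times> nat) set" where
  "tensor_arcs m n A = {(i, j). i < n \<and> j < n \<and>
      (\<exists>is \<in> tidx (m - 1) n. A (i # is) \<noteq> 0 \<and> j \<in> set is)}"

definition weakly_irreducible :: "nat \<Rightarrow> nat \<Rightarrow> (nat list \<Rightarrow> real) \<Rightarrow> bool" where
  "weakly_irreducible m n A \<longleftrightarrow>
     (\<forall>i < n. \<forall>j < n. (i, j) \<in> (tensor_arcs m n A)\<^sup>*)"

definition spectral_sym :: "nat \<Rightarrow> nat \<Rightarrow> (nat list \<Rightarrow> real) \<Rightarrow> nat \<Rightarrow> bool" where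
  "spectral_sym m n A l \<longleftrightarrow>
     eigenvalues m n A = (\<lambda>z. cis (2 * pi / real l) * z) ` eigenvalues m n A"

text \<open>(P A Q) for diagonal P, Q given by their diagonals p, q.\<close>
definition tensor_PQ :: "(nat \<Rightarrow> complex) \<Rightarrow> (nat list \<Rightarrow> real) \<Rightarrow> (nat \<Rightarrow> complex) \<Rightarrow> nat list \<Rightarrow> complex" where
  "tensor_PQ p A q is = p (hd is) * complex_of_real (A is) * prod_list (map q (tl is))"

definition Dset :: "nat \<Rightarrow> nat \<Rightarrow> (nat list \<Rightarrow> real) \<Rightarrow> nat \<Rightarrow> nat \<Rightarrow> complex mat set" where
  "Dset m n A l j = {D. D \<in> carrier_mat n n \<and> diagonal_mat D \<and> invertible_mat D \<and> D $$ (0, 0) = 1 \<and>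
      (\<forall>is \<in> tidx m n. complex_of_real (A is) =
          cis (- 2 * pi * real j / real l) *
          tensor_PQ (\<lambda>i. inverse ((D $$ (i, i)) ^ (m - 1))) A (\<lambda>i. D $$ (i, i)) is)}"

definition Dall :: "nat \<Rightarrow> nat \<Rightarrow> (nat list \<Rightarrow> real) \<Rightarrow> nat \<Rightarrow> complex mat set" where
  "Dall m n A l = (\<Union>j < l. Dset m n A l j)"

definition lam_j :: "nat \<Rightarrow> nat \<Rightarrow> (nat list \<Rightarrow> real) \<Rightarrow> nat \<Rightarrow> nat \<Rightarrow> complex" where
  "lam_j m n A l j = complex_of_real (spec_radius m n A) * cis (2 * pi * real j / real l)"

definition PVj :: "nat \<Rightarrow> nat \<Rightarrow> (nat list \<Rightarrow> real) \<Rightarrow> nat \<Rightarrow> nat \<Rightarrow> complex vec set" where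
  "PVj m n A l j = {y. is_eigenpair m n A (lam_j m n A l j) y \<and> y $ 0 = 1}"

definition PV :: "nat \<Rightarrow> nat \<Rightarrow> (nat list \<Rightarrow> real) \<Rightarrow> nat \<Rightarrow> complex vec set" where
  "PV m n A l = (\<Union>j < l. PVj m n A l j)"

definition vp :: "nat \<Rightarrow> nat \<Rightarrow> (nat list \<Rightarrow> real) \<Rightarrow> nat \<Rightarrow> complex vec" where
  "vp m n A l = (THE y. y \<in> PVj m n A l 0 \<and> (\<forall>i < n. y $ i \<in> \<real> \<and> 0 < Re (y $ i)))"

definition Dy :: "nat \<Rightarrow> complex vec \<Rightarrow> complex mat" where
  "Dy n y = mat n n (\<lambda>(i, k). if i = k then y $ i / complex_of_real (cmod (y $ i)) else 0)"

definition circ :: "nat \<Rightarrow> nat \<Rightarrow> (nat list \<Rightarrow> real) \<Rightarrow> nat \<Rightarrow> complex vec \<Rightarrow> complex vec \<Rightarrow> complex vec" where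
  "circ m n A l y z = Dy n y *\<^sub>v (Dy n z *\<^sub>v vp m n A l)"

definition PV_group :: "nat \<Rightarrow> nat \<Rightarrow> (nat list \<Rightarrow> real) \<Rightarrow> nat \<Rightarrow> complex vec monoid" where
  "PV_group m n A l = \<lparr>carrier = PV m n A l, mult = circ m n A l, one = vp m n A l\<rparr>"

definition D_group :: "nat \<Rightarrow> nat \<Rightarrow> (nat list \<Rightarrow> real) \<Rightarrow> nat \<Rightarrow> complex mat monoid" where
  "D_group m n A l = \<lparr>carrier = Dall m n A l, mult = (*), one = 1\<^sub>m n\<rparr>"

end

theory Submission
  imports Defs "HOL-Analysis.Function_Topology" "Jordan_Normal_Form.Determinant"
begin

(* Minimising the Collatz-Wielandt ratio max_i (A x^(m-1))_i / x_i^(m-1) over a compact box of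
   vectors >= 1 gives a positive eigenvector v, for an eigenvalue r >= 0: weak irreducibility
   bounds the box and forces every minimiser to be an eigenvector.  Comparing an eigenvector y
   with v entrywise gives |lambda| <= r, so r = rho(A).  If |lambda| = r the comparison is tight
   along every arc, so |y| = t v, and the phases u = D_y satisfy
   u_(i_2) ... u_(i_m) = omega u_i^(m-1) whenever a_(i i_2 ... i_m) <> 0, where lambda = r omega.
   Conversely every such u gives the eigenvector D_u v, and the same condition characterises
   D_u in D^(j) for omega = e^(2 pi i j / l).  So y |-> D_y identifies PV_j with D^(j), and the
   product on PV becomes pointwise multiplication of phases, which multiplies the omegas.
   Spectral symmetry makes each r e^(2 pi i j / l) an eigenvalue, so every PV_j is nonempty and
   hence a coset of PV_0. *)

lemma prod_list_map_pos:
  "(\<And>k. k \<in> set js \<Longrightarrow> 0 < (x k :: real)) \<Longrightarrow> 0 < prod_list (map x js)"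
  by (induction js) auto

lemma prod_list_map_mono:
  "(\<And>k. k \<in> set js \<Longrightarrow> 0 \<le> x k \<and> x k \<le> (y k :: real)) \<Longrightarrow>
    prod_list (map x js) \<le> prod_list (map y js)"
proof (induction js)
  case (Cons a js)
  then have "0 \<le> prod_list (map x js)" "0 \<le> x a" "x a \<le> y a" by (auto intro!: prod_list_nonneg)
  with Cons show ?case by (simp add: mult_mono')
qed simp

lemma prod_list_map_strict_mono:
  assumes "\<And>k. k \<in> set js \<Longrightarrow> 0 \<le> x k \<and> x k \<le> (y k :: real) \<and> 0 < y k"
    and "j \<in> set js" and "x j < y j"
  shows "prod_list (map x js) < prod_list (map y js)"
  using assms
proof (induction js)
  case (Cons a js)
  have le: "prod_list (map x js) \<le> prod_list (map y js)"
    using Cons.prems(1) by (intro prod_list_map_mono) auto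
  have x_nonneg: "0 \<le> prod_list (map x js)" and y_pos: "0 < prod_list (map y js)"
    using Cons.prems(1) by (auto intro!: prod_list_nonneg prod_list_map_pos)
  have a: "0 \<le> x a" "x a \<le> y a" "0 < y a" using Cons.prems(1) by auto
  show ?case
  proof (cases "j = a")
    case True
    have "x a * prod_list (map x js) \<le> x a * prod_list (map y js)"
      using le a by (simp add: mult_left_mono)
    also have "\<dots> < y a * prod_list (map y js)"
      using True Cons.prems(3) y_pos by simp
    finally show ?thesis by simp
  next
    case False
    then have "prod_list (map x js) < prod_list (map y js)" using Cons by auto
    have "x a * prod_list (map x js) \<le> y a * prod_list (map x js)"
      using a x_nonneg by (simp add: mult_right_mono)
    also have "\<dots> < y a * prod_list (map y js)"
      using \<open>prod_list (map x js) < prod_list (map y js)\<close> a by simp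
    finally show ?thesis by simp
  qed
qed simp

lemma prod_list_map_eq_imp_eq:
  assumes "\<And>k. k \<in> set js \<Longrightarrow> 0 \<le> x k \<and> x k \<le> (y k :: real) \<and> 0 < y k"
    and "prod_list (map x js) = prod_list (map y js)" and "j \<in> set js"
  shows "x j = y j"
  using prod_list_map_strict_mono[OF assms(1,3)] assms by force

lemma member_le_prod_list_map:
  "(\<And>k. k \<in> set js \<Longrightarrow> 1 \<le> (x k :: real)) \<Longrightarrow> j \<in> set js \<Longrightarrow> x j \<le> prod_list (map x js)"
proof (induction js)
  case (Cons a js)
  have "1 \<le> prod_list (map x js)"
    using Cons.prems(1) prod_list_map_mono[of js "\<lambda>_. 1" x] by (simp add: map_replicate_const)
  moreover have "1 \<le> x a" using Cons.prems(1) by simp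
  ultimately show ?case
  proof (cases "j = a")
    case False
    then have "x j \<le> prod_list (map x js)" using Cons by simp
    also have "\<dots> \<le> x a * prod_list (map x js)"
      using \<open>1 \<le> x a\<close> \<open>1 \<le> prod_list (map x js)\<close>
        mult_right_mono[of 1 "x a" "prod_list (map x js)"]
      by simp
    finally show ?thesis by simp
  qed simp
qed simp

lemma norm_prod_list_map:
  "norm (prod_list (map f js)) =
    prod_list (map (\<lambda>k. norm (f k :: 'a :: real_normed_div_algebra)) js)"
  by (induction js) (auto simp: norm_mult)

lemma prod_list_map_mult:
  "prod_list (map (\<lambda>k. f k * g k) js) =
    prod_list (map f js) * (prod_list (map g js) :: 'a :: comm_monoid_mult)"
  by (induction js) (auto simp: ac_simps)

lemma of_real_prod_list_map:
  "of_real (prod_list (map f js)) = prod_list (map (\<lambda>k. of_real (f k) :: 'a :: real_algebra_1) js)"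
  by (induction js) auto

lemma cnj_prod_list_map: "cnj (prod_list (map f js)) = prod_list (map (\<lambda>k. cnj (f k)) js)"
  by (induction js) auto

lemma prod_list_map_const_mult:
  "prod_list (map (\<lambda>k. c * f k) js) =
    c ^ length js * (prod_list (map f js) :: 'a :: comm_monoid_mult)"
  by (induction js) (auto simp: ac_simps)

lemma sum_mono_eq_imp_eq:
  fixes f g :: "'a \<Rightarrow> real"
  assumes "finite S" "\<And>s. s \<in> S \<Longrightarrow> f s \<le> g s" "sum f S = sum g S" "s \<in> S"
  shows "f s = g s"
  using sum_strict_mono_ex1[of S f g] assms by force

lemma unimodular_mult_cnj: "cmod z = 1 \<Longrightarrow> z * cnj z = 1"
  using complex_norm_square[of z] by simp

lemma unimodular_Re_eq_1: "cmod z = 1 \<Longrightarrow> Re z = 1 \<Longrightarrow> z = 1"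
  using cmod_power2[of z] by (simp add: complex_eq_iff)

lemma unimodular_sum_eq_imp_eq:
  fixes c :: "'a \<Rightarrow> real" and P :: "'a \<Rightarrow> complex"
  assumes "finite S" and c: "\<And>s. s \<in> S \<Longrightarrow> 0 \<le> c s"
    and P: "\<And>s. s \<in> S \<Longrightarrow> cmod (P s) = 1" and W: "cmod W = 1"
    and sum_eq: "(\<Sum>s\<in>S. of_real (c s) * P s) = of_real (\<Sum>s\<in>S. c s) * W"
    and "s \<in> S" "0 < c s"
  shows "P s = W"
proof -
  define Q where "Q s = cnj W * P s" for s
  have "(\<Sum>s\<in>S. of_real (c s) * Q s) = cnj W * (\<Sum>s\<in>S. of_real (c s) * P s)"
    unfolding Q_def sum_distrib_left by (simp add: ac_simps)
  also have "\<dots> = of_real (\<Sum>s\<in>S. c s) * (W * cnj W)"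
    unfolding sum_eq by (simp only: ac_simps)
  also have "\<dots> = of_real (\<Sum>s\<in>S. c s)"
    using unimodular_mult_cnj[OF W] by simp
  finally have "(\<Sum>s\<in>S. of_real (c s) * Q s) = of_real (\<Sum>s\<in>S. c s)" .
  from arg_cong[where f = Re, OF this] have sum_Re: "(\<Sum>s\<in>S. c s * Re (Q s)) = (\<Sum>s\<in>S. c s)"
    by (simp add: Re_sum)
  have Re_le: "c s' * Re (Q s') \<le> c s'" if "s' \<in> S" for s'
  proof -
    have "cmod (Q s') = 1" using P[OF that] W by (simp add: Q_def norm_mult)
    then have "Re (Q s') \<le> 1" using complex_Re_le_cmod[of "Q s'"] by simp
    then show ?thesis using mult_left_mono[OF _ c[OF that], of "Re (Q s')" 1] by simp
  qed
  have "c s * Re (Q s) = c s"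
    by (rule sum_mono_eq_imp_eq[OF \<open>finite S\<close> Re_le sum_Re \<open>s \<in> S\<close>])
  then have "Re (Q s) = 1" using \<open>0 < c s\<close> by simp
  moreover have "cmod (Q s) = 1" using P[OF \<open>s \<in> S\<close>] W by (simp add: Q_def norm_mult)
  ultimately have "Q s = 1" by (rule unimodular_Re_eq_1[rotated])
  have "P s = (W * cnj W) * P s" using unimodular_mult_cnj[OF W] by simp
  also have "\<dots> = W * Q s" by (simp add: Q_def mult.assoc)
  finally show ?thesis using \<open>Q s = 1\<close> by simp
qed

lemma power_between_exists:
  fixes a b :: real
  assumes "0 < k" "0 \<le> a" "a < b"
  obtains c where "0 < c" "c < 1" "a < c ^ k * b"
proof -
  define q where "q = a / b"
  have "0 < b" "0 \<le> q" "q < 1" using assms by (auto simp: q_def)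
  define c where "c = root k ((1 + q) / 2)"
  have ck: "c ^ k = (1 + q) / 2" and "0 < c" "c < 1"
    using assms(1) \<open>0 \<le> q\<close> \<open>q < 1\<close> by (auto simp: c_def real_root_gt_zero real_root_lt_1_iff)
  have "a < c ^ k * b" unfolding ck using \<open>0 < b\<close> \<open>q < 1\<close> by (simp add: q_def field_simps)
  with \<open>0 < c\<close> \<open>c < 1\<close> show ?thesis by (rule that)
qed

lemma finite_tidx [simp]: "finite (tidx k n)"
proof -
  have "tidx k n = {xs. set xs \<subseteq> {..<n} \<and> length xs = k}" unfolding tidx_def by auto
  then show ?thesis using finite_lists_length_eq[of "{..<n}" k] by simp
qed

lemma Cons_in_tidx_iff: "0 < k \<Longrightarrow> i # js \<in> tidx k n \<longleftrightarrow> i < n \<and> js \<in> tidx (k - 1) n"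
  unfolding tidx_def by auto

lemma tidx_length: "js \<in> tidx k n \<Longrightarrow> length js = k"
  unfolding tidx_def by auto

lemma tidx_set: "js \<in> tidx k n \<Longrightarrow> j \<in> set js \<Longrightarrow> j < n"
  unfolding tidx_def by auto

lemma tidx_ConsE:
  assumes "is \<in> tidx k n" "0 < k"
  obtains i js where "is = i # js" "i < n" "js \<in> tidx (k - 1) n"
  using assms unfolding tidx_def by (cases "is") auto

definition tensor_apply_real :: "nat \<Rightarrow> nat \<Rightarrow> (nat list \<Rightarrow> real) \<Rightarrow> (nat \<Rightarrow> real) \<Rightarrow> nat \<Rightarrow> real" where
  "tensor_apply_real m n A x i = (\<Sum>js\<in>tidx (m - 1) n. A (i # js) * prod_list (map x js))"

lemma tensor_apply_real_cong:
  "(\<And>k. k < n \<Longrightarrow> x k = y k) \<Longrightarrow> tensor_apply_real m n A x i = tensor_apply_real m n A y i"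
  unfolding tensor_apply_real_def
  by (intro sum.cong refl arg_cong2[where f = "(*)"] arg_cong[where f = prod_list] map_cong)
    (auto dest: tidx_set)

lemma tensor_apply_real_smult:
  "tensor_apply_real m n A (\<lambda>k. c * x k) i = c ^ (m - 1) * tensor_apply_real m n A x i"
  unfolding tensor_apply_real_def sum_distrib_left
  by (intro sum.cong refl) (simp add: prod_list_map_const_mult tidx_length)

lemma tensor_apply_nth:
  "i < n \<Longrightarrow> tensor_apply m n A y $ i =
    (\<Sum>js\<in>tidx (m - 1) n. of_real (A (i # js)) * prod_list (map (\<lambda>k. y $ k) js))"
  by (simp add: tensor_apply_def)

lemma is_eigenpair_iff:
  "is_eigenpair m n A lam y \<longleftrightarrow>
    y \<in> carrier_vec n \<and> y \<noteq> 0\<^sub>v n \<and> (\<forall>i<n. tensor_apply m n A y $ i = lam * (y $ i) ^ (m - 1))"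
  unfolding is_eigenpair_def vec_eq_iff by (auto simp: tensor_apply_def vpow_def)

lemma is_eigenpair_smult:
  assumes "is_eigenpair m n A lam y" "c \<noteq> 0"
  shows "is_eigenpair m n A lam (c \<cdot>\<^sub>v y)"
proof -
  have y: "y \<in> carrier_vec n" "y \<noteq> 0\<^sub>v n" "\<forall>i<n. tensor_apply m n A y $ i = lam * (y $ i) ^ (m - 1)"
    using assms(1) unfolding is_eigenpair_iff by auto
  have "tensor_apply m n A (c \<cdot>\<^sub>v y) $ i = c ^ (m - 1) * tensor_apply m n A y $ i" if "i < n" for i
  proof -
    have "prod_list (map (\<lambda>k. (c \<cdot>\<^sub>v y) $ k) js) = c ^ (m - 1) * prod_list (map (\<lambda>k. y $ k) js)"
      if "js \<in> tidx (m - 1) n" for js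
    proof -
      have "map (\<lambda>k. (c \<cdot>\<^sub>v y) $ k) js = map (\<lambda>k. c * y $ k) js"
        using that y(1) by (auto dest: tidx_set)
      then have "prod_list (map (\<lambda>k. (c \<cdot>\<^sub>v y) $ k) js) = prod_list (map (\<lambda>k. c * y $ k) js)"
        by (rule arg_cong)
      also have "\<dots> = c ^ (m - 1) * prod_list (map (\<lambda>k. y $ k) js)"
        using prod_list_map_const_mult[of c "\<lambda>k. y $ k" js] tidx_length[OF that] by simp
      finally show ?thesis .
    qed
    then show ?thesis
      using that unfolding tensor_apply_nth[OF that] sum_distrib_left
      by (intro sum.cong refl) (simp add: ac_simps)
  qed
  moreover have "c \<cdot>\<^sub>v y \<noteq> 0\<^sub>v n"
  proof
    assume cy: "c \<cdot>\<^sub>v y = 0\<^sub>v n"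
    have "y = 0\<^sub>v n"
    proof (rule eq_vecI)
      fix i assume i: "i < dim_vec (0\<^sub>v n :: complex vec)"
      then have "c * y $ i = 0" using arg_cong[OF cy, of "\<lambda>w. w $ i"] y(1) by simp
      then show "y $ i = 0\<^sub>v n $ i" using assms(2) i by simp
    qed (use y(1) in simp)
    with y(2) show False ..
  qed
  ultimately show ?thesis
    using y unfolding is_eigenpair_iff by (simp add: power_mult_distrib)
qed

lemma continuous_map_Max:
  assumes "finite I" "I \<noteq> {}" "\<And>i. i \<in> I \<Longrightarrow> continuous_map X euclideanreal (f i)"
  shows "continuous_map X euclideanreal (\<lambda>x. Max ((\<lambda>i. f i x) ` I))"
  using assms
proof (induction I rule: finite_ne_induct)
  case (insert a F)
  have "(\<lambda>x. Max ((\<lambda>i. f i x) ` insert a F)) = (\<lambda>x. max (f a x) (Max ((\<lambda>i. f i x) ` F)))"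
    using insert by auto
  then show ?case using insert by (auto intro!: continuous_map_real_max)
qed simp

lemma continuous_map_prod_list_map:
  "set js \<subseteq> I \<Longrightarrow>
    continuous_map (product_topology (\<lambda>_. euclideanreal) I) euclideanreal
      (\<lambda>x. prod_list (map x js))"
  by (induction js) (auto intro!: continuous_map_real_mult continuous_map_product_projection)

definition phase_compatible ::
    "nat \<Rightarrow> nat \<Rightarrow> (nat list \<Rightarrow> real) \<Rightarrow> complex \<Rightarrow> (nat \<Rightarrow> complex) \<Rightarrow> bool" where
  "phase_compatible m n A \<omega> u \<longleftrightarrow>
    (\<forall>i js. i # js \<in> tidx m n \<longrightarrow> A (i # js) \<noteq> 0 \<longrightarrow> prod_list (map u js) = \<omega> * u i ^ (m - 1))"

definition admissible_phases ::
    "nat \<Rightarrow> nat \<Rightarrow> (nat list \<Rightarrow> real) \<Rightarrow> complex \<Rightarrow> (nat \<Rightarrow> complex) set" where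
  "admissible_phases m n A \<omega> = {u. (\<forall>i<n. cmod (u i) = 1) \<and> u 0 = 1 \<and> phase_compatible m n A \<omega> u}"

definition phase_vec :: "nat \<Rightarrow> (nat \<Rightarrow> real) \<Rightarrow> (nat \<Rightarrow> complex) \<Rightarrow> complex vec" where
  "phase_vec n v u = vec n (\<lambda>i. of_real (v i) * u i)"

definition diag_of :: "nat \<Rightarrow> (nat \<Rightarrow> complex) \<Rightarrow> complex mat" where
  "diag_of n u = mat n n (\<lambda>(i, k). if i = k then u i else 0)"

definition unit_root :: "nat \<Rightarrow> nat \<Rightarrow> complex" where
  "unit_root l j = cis (2 * pi * real j / real l)"

lemma phase_compatible_mult:
  "phase_compatible m n A \<omega> a \<Longrightarrow> phase_compatible m n A \<omega>' b \<Longrightarrow>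
    phase_compatible m n A (\<omega> * \<omega>') (\<lambda>i. a i * b i)"
  unfolding phase_compatible_def by (auto simp: prod_list_map_mult power_mult_distrib ac_simps)

lemma phase_compatible_cnj:
  "phase_compatible m n A \<omega> u \<Longrightarrow> phase_compatible m n A (cnj \<omega>) (\<lambda>i. cnj (u i))"
  unfolding phase_compatible_def by (auto simp flip: cnj_prod_list_map)

lemma admissible_phases_mult:
  "a \<in> admissible_phases m n A \<omega> \<Longrightarrow> b \<in> admissible_phases m n A \<omega>' \<Longrightarrow>
    (\<lambda>i. a i * b i) \<in> admissible_phases m n A (\<omega> * \<omega>')"
  unfolding admissible_phases_def by (auto simp: phase_compatible_mult norm_mult)

lemma admissible_phases_cnj:
  "u \<in> admissible_phases m n A \<omega> \<Longrightarrow> (\<lambda>i. cnj (u i)) \<in> admissible_phases m n A (cnj \<omega>)"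
  unfolding admissible_phases_def by (auto simp: phase_compatible_cnj)

lemma admissible_phases_one: "(\<lambda>_. 1) \<in> admissible_phases m n A 1"
  unfolding admissible_phases_def phase_compatible_def by (simp add: map_replicate_const)

lemma admissible_phases_unimodular: "u \<in> admissible_phases m n A \<omega> \<Longrightarrow> i < n \<Longrightarrow> cmod (u i) = 1"
  unfolding admissible_phases_def by auto

lemma phase_vec_cong: "(\<And>i. i < n \<Longrightarrow> a i = b i) \<Longrightarrow> phase_vec n v a = phase_vec n v b"
  unfolding phase_vec_def by (rule eq_vecI) auto

lemma phase_vec_nth: "i < n \<Longrightarrow> phase_vec n v u $ i = of_real (v i) * u i"
  unfolding phase_vec_def by simp

lemma of_real_norm_mult_sgn: "of_real (cmod z) * sgn z = z"
  by (cases "z = 0") (simp_all add: Complex.sgn_eq)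

lemma diag_of_nth: "i < n \<Longrightarrow> k < n \<Longrightarrow> diag_of n u $$ (i, k) = (if i = k then u i else 0)"
  unfolding diag_of_def by simp

lemma diag_of_cong: "(\<And>i. i < n \<Longrightarrow> a i = b i) \<Longrightarrow> diag_of n a = diag_of n b"
  unfolding diag_of_def by (rule eq_matI) auto

lemma diag_of_carrier [simp]: "diag_of n u \<in> carrier_mat n n"
  unfolding diag_of_def by simp

lemma diag_of_mult_vec: "diag_of n a *\<^sub>v vec n f = vec n (\<lambda>i. a i * f i)"
proof (rule eq_vecI)
  fix i assume "i < dim_vec (vec n (\<lambda>i. a i * f i))"
  then have i: "i < n" by simp
  have "(diag_of n a *\<^sub>v vec n f) $ i = (\<Sum>k\<in>{0..<n}. (if i = k then a i else 0) * f k)"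
    using i by (simp add: scalar_prod_def diag_of_def)
  also have "\<dots> = (\<Sum>k\<in>{0..<n}. if k = i then a i * f i else 0)"
    by (intro sum.cong) auto
  also have "\<dots> = a i * f i"
    using i by simp
  finally show "(diag_of n a *\<^sub>v vec n f) $ i = vec n (\<lambda>i. a i * f i) $ i" using i by simp
qed (simp add: diag_of_def)

lemma diag_of_mult: "diag_of n a * diag_of n b = diag_of n (\<lambda>i. a i * b i)"
proof (rule eq_matI)
  fix i k assume "i < dim_row (diag_of n (\<lambda>i. a i * b i))" "k < dim_col (diag_of n (\<lambda>i. a i * b i))"
  then have i: "i < n" and k: "k < n" by (auto simp: diag_of_def)
  have "(diag_of n a * diag_of n b) $$ (i, k) =
      (\<Sum>t\<in>{0..<n}. (if i = t then a i else 0) * (if t = k then b t else 0))"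
    using i k by (simp add: scalar_prod_def diag_of_def)
  also have "\<dots> = (\<Sum>t\<in>{0..<n}. if t = i then (if i = k then a i * b i else 0) else 0)"
    by (intro sum.cong) auto
  also have "\<dots> = (if i = k then a i * b i else 0)"
    using i by simp
  finally show "(diag_of n a * diag_of n b) $$ (i, k) = diag_of n (\<lambda>i. a i * b i) $$ (i, k)"
    using i k by (simp add: diag_of_nth)
qed (auto simp: diag_of_def)

lemma diag_of_one: "(\<And>i. i < n \<Longrightarrow> u i = 1) \<Longrightarrow> diag_of n u = 1\<^sub>m n"
  by (rule eq_matI) (auto simp: diag_of_def)

lemma diag_of_eq_imp_eq: "diag_of n a = diag_of n b \<Longrightarrow> i < n \<Longrightarrow> a i = b i"
  using diag_of_nth[of i n i a] diag_of_nth[of i n i b] by simp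

lemma diagonal_mat_diag_of: "diagonal_mat (diag_of n u)"
  unfolding diagonal_mat_def diag_of_def by simp

lemma invertible_diag_of:
  assumes "\<And>i. i < n \<Longrightarrow> u i \<noteq> 0"
  shows "invertible_mat (diag_of n u)"
proof -
  have "diag_of n u * diag_of n (\<lambda>i. inverse (u i)) = 1\<^sub>m n"
    "diag_of n (\<lambda>i. inverse (u i)) * diag_of n u = 1\<^sub>m n"
    using assms by (auto simp: diag_of_mult intro: diag_of_one)
  then show ?thesis
    unfolding invertible_mat_def inverts_mat_def by (auto simp: diag_of_def)
qed

lemma diagonal_mat_eq_diag_of:
  "D \<in> carrier_mat n n \<Longrightarrow> diagonal_mat D \<Longrightarrow> D = diag_of n (\<lambda>k. D $$ (k, k))"
  unfolding diagonal_mat_def by (intro eq_matI) (auto simp: diag_of_def)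

lemma Dy_eq_diag_of_sgn: "Dy n y = diag_of n (\<lambda>i. sgn (y $ i))"
  unfolding Dy_def diag_of_def Complex.sgn_eq by (rule refl)

lemma Dy_phase_vec:
  assumes "\<And>i. i < n \<Longrightarrow> 0 < v i" "\<And>i. i < n \<Longrightarrow> cmod (u i) = 1"
  shows "Dy n (phase_vec n v u) = diag_of n u"
  unfolding Dy_eq_diag_of_sgn
proof (rule diag_of_cong)
  fix i assume "i < n"
  then have "sgn (u i) = u i" using assms(2) by (simp add: sgn_div_norm)
  then show "sgn (phase_vec n v u $ i) = u i"
    using assms(1) \<open>i < n\<close> by (simp add: phase_vec_nth sgn_mult sgn_of_real)
qed

lemma invertible_diagonal_mat_entry_nonzero:
  assumes D: "D \<in> carrier_mat n n" "diagonal_mat D" "invertible_mat (D :: complex mat)" and "k < n"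
  shows "D $$ (k, k) \<noteq> 0"
proof -
  obtain B where B: "D * B = 1\<^sub>m n" "B * D = 1\<^sub>m (dim_row B)"
    using D unfolding invertible_mat_def inverts_mat_def by auto
  have "B \<in> carrier_mat n n"
    using arg_cong[OF B(1), of dim_col] arg_cong[OF B(2), of dim_col] D(1) by auto
  then have "det D \<noteq> 0" using det_mult[OF D(1)] B(1) by fastforce
  moreover have "upper_triangular D"
    using D(1,2) unfolding upper_triangular_def diagonal_mat_def by (auto dest!: carrier_matD)
  ultimately have "0 \<notin> set (diag_mat D)"
    using det_upper_triangular[OF _ D(1)] by (simp add: prod_list_zero_iff)
  then show ?thesis using \<open>k < n\<close> D(1) unfolding diag_mat_def by auto
qed

lemma unit_root_add: "unit_root l j * unit_root l k = unit_root l (j + k)"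
  unfolding unit_root_def cis_mult by (simp add: add_divide_distrib distrib_left)

lemma unit_root_mod: "0 < l \<Longrightarrow> unit_root l (j mod l) = unit_root l j"
proof -
  assume "0 < l"
  have j: "real j = real (j mod l) + real l * real (j div l)"
    by (metis mod_mult_div_eq of_nat_add of_nat_mult)
  have "2 * pi * real j / real l = 2 * pi * real (j mod l) / real l + 2 * pi * real (j div l)"
    using \<open>0 < l\<close> unfolding j by (simp add: field_simps)
  moreover have "cis (2 * pi * real (j div l)) = 1" by (rule cis_multiple_2pi) simp
  ultimately show ?thesis
    unfolding unit_root_def by (simp add: cis_mult[symmetric])
qed

lemma cnj_unit_root: "j < l \<Longrightarrow> cnj (unit_root l j) = unit_root l (l - j)"
proof -
  assume "j < l"
  then have "2 * pi * real (l - j) / real l = - (2 * pi * real j / real l) + 2 * pi"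
    by (simp add: of_nat_diff field_simps)
  then show ?thesis unfolding unit_root_def by (simp add: complex_eq_iff)
qed

lemma norm_unit_root [simp]: "cmod (unit_root l j) = 1"
  unfolding unit_root_def by simp

lemma unit_root_0 [simp]: "unit_root l 0 = 1"
  unfolding unit_root_def by simp

lemma cis_unit_root_cancel:
  fixes a :: real
  assumes "a \<noteq> 0" "e \<noteq> 0"
  shows "of_real a = cis (- 2 * pi * real j / real l) * (inverse e * of_real a * p) \<longleftrightarrow>
    p = unit_root l j * e"
proof -
  define c where "c = cis (- 2 * pi * real j / real l)"
  have c: "c * unit_root l j = 1" unfolding c_def unit_root_def cis_mult by simp
  have "of_real a = c * (inverse e * of_real a * p) \<longleftrightarrow> e = c * p"
    using assms by (auto simp: field_simps)
  also have "\<dots> \<longleftrightarrow> p = unit_root l j * e"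
  proof
    assume "e = c * p"
    then show "p = unit_root l j * e" using c by (simp add: ac_simps)
  next
    assume "p = unit_root l j * e"
    then show "e = c * p" using c by (simp add: mult.assoc[symmetric])
  qed
  finally show ?thesis unfolding c_def .
qed

lemma Dset_identity_iff_phase_compatible:
  assumes "0 < m" and d: "\<And>k. k < n \<Longrightarrow> d k \<noteq> 0"
  shows "(\<forall>is \<in> tidx m n. of_real (A is) =
            cis (- 2 * pi * real j / real l) * tensor_PQ (\<lambda>i. inverse (d i ^ (m - 1))) A d is)
    \<longleftrightarrow> phase_compatible m n A (unit_root l j) d"
    (is "(\<forall>is \<in> tidx m n. ?identity is) \<longleftrightarrow> _")
proof -
  have identity_iff: "?identity (i # js) \<longleftrightarrow>
      (A (i # js) \<noteq> 0 \<longrightarrow> prod_list (map d js) = unit_root l j * d i ^ (m - 1))"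
    if "i # js \<in> tidx m n" for i js
  proof -
    have "d i ^ (m - 1) \<noteq> 0" using d that \<open>0 < m\<close> by (simp add: Cons_in_tidx_iff)
    then show ?thesis
      using cis_unit_root_cancel[of "A (i # js)" "d i ^ (m - 1)"]
      by (cases "A (i # js) = 0") (simp_all add: tensor_PQ_def)
  qed
  have "(\<forall>is \<in> tidx m n. ?identity is) \<longleftrightarrow> (\<forall>i js. i # js \<in> tidx m n \<longrightarrow> ?identity (i # js))"
    using \<open>0 < m\<close> by (blast elim: tidx_ConsE)
  also have "\<dots> \<longleftrightarrow> phase_compatible m n A (unit_root l j) d"
    unfolding phase_compatible_def using identity_iff by blast
  finally show ?thesis .
qed

locale nonneg_tensor =
  fixes m n :: nat and A :: "nat list \<Rightarrow> real"
  assumes order_ge_2: "2 \<le> m" and nonneg: "tensor_nonneg m n A"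
begin

abbreviation Ax :: "(nat \<Rightarrow> real) \<Rightarrow> nat \<Rightarrow> real" where
  "Ax \<equiv> tensor_apply_real m n A"

lemma order_pos: "0 < m"
  using order_ge_2 by simp

lemma entry_nonneg: "i < n \<Longrightarrow> js \<in> tidx (m - 1) n \<Longrightarrow> 0 \<le> A (i # js)"
  using nonneg order_ge_2 unfolding tensor_nonneg_def by (simp add: Cons_in_tidx_iff)

lemma Ax_nonneg: "i < n \<Longrightarrow> (\<And>k. k < n \<Longrightarrow> 0 \<le> x k) \<Longrightarrow> 0 \<le> Ax x i"
  unfolding tensor_apply_real_def
  by (intro sum_nonneg mult_nonneg_nonneg entry_nonneg prod_list_nonneg) (auto dest: tidx_set)

lemma Ax_mono:
  "i < n \<Longrightarrow> (\<And>k. k < n \<Longrightarrow> 0 \<le> x k \<and> x k \<le> y k) \<Longrightarrow> Ax x i \<le> Ax y i"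
  unfolding tensor_apply_real_def
  by (intro sum_mono mult_left_mono entry_nonneg prod_list_map_mono) (auto dest: tidx_set)

lemma Ax_strict_mono_arc:
  assumes "(k, j) \<in> tensor_arcs m n A"
    and "\<And>i. i < n \<Longrightarrow> 0 \<le> x i \<and> x i \<le> y i \<and> 0 < y i" and "x j < y j"
  shows "Ax x k < Ax y k"
proof -
  obtain js where js: "k < n" "js \<in> tidx (m - 1) n" "A (k # js) \<noteq> 0" "j \<in> set js"
    using assms(1) unfolding tensor_arcs_def by auto
  have "0 < A (k # js)" using entry_nonneg[OF js(1,2)] js(3) by simp
  moreover have "prod_list (map x js) < prod_list (map y js)"
    using assms(2,3) js by (intro prod_list_map_strict_mono) (auto dest: tidx_set)
  ultimately have "A (k # js) * prod_list (map x js) < A (k # js) * prod_list (map y js)"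
    by simp
  moreover have "A (k # js') * prod_list (map x js') \<le> A (k # js') * prod_list (map y js')"
    if "js' \<in> tidx (m - 1) n" for js'
    using that js(1) assms(2)
    by (intro mult_left_mono entry_nonneg prod_list_map_mono) (auto dest: tidx_set)
  ultimately show ?thesis
    unfolding tensor_apply_real_def using js(2) by (intro sum_strict_mono_ex1) auto
qed

lemma norm_tensor_apply_le:
  assumes "y \<in> carrier_vec n" "i < n"
  shows "cmod (tensor_apply m n A y $ i) \<le> Ax (\<lambda>k. cmod (y $ k)) i"
  unfolding tensor_apply_nth[OF assms(2)] tensor_apply_real_def
proof (rule order_trans[OF norm_sum sum_mono])
  fix js assume "js \<in> tidx (m - 1) n"
  then show "cmod (of_real (A (i # js)) * prod_list (map (\<lambda>k. y $ k) js))
      \<le> A (i # js) * prod_list (map (\<lambda>k. cmod (y $ k)) js)"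
    using entry_nonneg[OF assms(2)] by (simp add: norm_mult norm_prod_list_map)
qed

lemma continuous_map_Ax:
  "continuous_map (product_topology (\<lambda>_. euclideanreal) {..<n}) euclideanreal (\<lambda>x. Ax x i)"
  unfolding tensor_apply_real_def
  by (intro continuous_map_sum continuous_map_real_mult continuous_map_prod_list_map)
    (auto dest: tidx_set)

lemma phase_vec_eigenpair:
  assumes "0 < n" and v: "\<And>i. i < n \<Longrightarrow> 0 < v i" "\<And>i. i < n \<Longrightarrow> Ax v i = r * v i ^ (m - 1)"
    and "u 0 \<noteq> 0" and u: "phase_compatible m n A \<omega> u"
  shows "is_eigenpair m n A (of_real r * \<omega>) (phase_vec n v u)"
  unfolding is_eigenpair_iff
proof (intro conjI allI impI)
  show "phase_vec n v u \<in> carrier_vec n" by (simp add: phase_vec_def)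
  have "phase_vec n v u $ 0 \<noteq> 0" using assms(1,4) v(1)[OF assms(1)] by (simp add: phase_vec_nth)
  then show "phase_vec n v u \<noteq> 0\<^sub>v n" using \<open>0 < n\<close> by auto
  fix i assume i: "i < n"
  have summand: "of_real (A (i # js)) * prod_list (map (\<lambda>k. phase_vec n v u $ k) js)
      = of_real (A (i # js) * prod_list (map v js)) * (\<omega> * u i ^ (m - 1))"
    if js: "js \<in> tidx (m - 1) n" for js
  proof -
    have "prod_list (map (\<lambda>k. phase_vec n v u $ k) js) =
        prod_list (map (\<lambda>k. of_real (v k) * u k) js)"
      using js by (intro arg_cong[where f = prod_list] map_cong)
        (auto simp: phase_vec_nth dest: tidx_set)
    also have "\<dots> = of_real (prod_list (map v js)) * prod_list (map u js)"
      by (simp add: prod_list_map_mult of_real_prod_list_map)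
    finally show ?thesis
      using u i js order_ge_2 unfolding phase_compatible_def
      by (cases "A (i # js) = 0") (auto simp: Cons_in_tidx_iff)
  qed
  have "tensor_apply m n A (phase_vec n v u) $ i = of_real (Ax v i) * (\<omega> * u i ^ (m - 1))"
    unfolding tensor_apply_nth[OF i] tensor_apply_real_def of_real_sum sum_distrib_right
    by (intro sum.cong refl summand)
  then show "tensor_apply m n A (phase_vec n v u) $ i =
      of_real r * \<omega> * (phase_vec n v u $ i) ^ (m - 1)"
    using v(2)[OF i] i by (simp add: phase_vec_nth power_mult_distrib)
qed

section \<open>A positive eigenvector\<close>

definition subeigen :: "real \<Rightarrow> (nat \<Rightarrow> real) \<Rightarrow> bool" where
  "subeigen \<rho> x \<longleftrightarrow> (\<forall>i<n. 0 < x i \<and> Ax x i \<le> \<rho> * x i ^ (m - 1))"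

definition slack :: "real \<Rightarrow> (nat \<Rightarrow> real) \<Rightarrow> nat set" where
  "slack \<rho> x = {i. i < n \<and> Ax x i < \<rho> * x i ^ (m - 1)}"

lemma subeigen_mono: "subeigen r x \<Longrightarrow> r \<le> R \<Longrightarrow> subeigen R x"
  unfolding subeigen_def by (auto intro: order_trans mult_right_mono)

text \<open>Shrink \<open>x\<^sub>j\<close> just enough to keep \<open>j\<close> slack; through the arc \<open>(k, j)\<close> this makes \<open>k\<close> slack.\<close>
lemma subeigen_extend_slack:
  assumes x: "subeigen \<rho> x" and j: "j \<in> slack \<rho> x"
    and arc: "(k, j) \<in> tensor_arcs m n A" and k: "k \<notin> slack \<rho> x"
  obtains x' where "subeigen \<rho> x'" "insert k (slack \<rho> x) \<subseteq> slack \<rho> x'"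
proof -
  have "j < n" and j_slack: "Ax x j < \<rho> * x j ^ (m - 1)" using j by (auto simp: slack_def)
  have "k < n" "k \<noteq> j" using arc j k by (auto simp: tensor_arcs_def)
  have x_pos: "0 < x i" and x_sub: "Ax x i \<le> \<rho> * x i ^ (m - 1)" if "i < n" for i
    using x that by (auto simp: subeigen_def)
  have "0 < m - 1" using order_ge_2 by simp
  moreover have "0 \<le> Ax x j" using Ax_nonneg[OF \<open>j < n\<close>] x_pos by (simp add: less_imp_le)
  ultimately obtain c where c: "0 < c" "c < 1" "Ax x j < c ^ (m - 1) * (\<rho> * x j ^ (m - 1))"
    using j_slack by (rule power_between_exists)
  define x' where "x' = x(j := c * x j)"
  have x'_le: "0 \<le> x' i \<and> x' i \<le> x i \<and> 0 < x i" if "i < n" for i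
    using x_pos[OF that] x_pos[OF \<open>j < n\<close>] c by (auto simp: x'_def mult_le_cancel_right1)
  have Ax_le: "Ax x' i \<le> Ax x i" if "i < n" for i
    using Ax_mono[OF that] x'_le by blast
  have slack_j: "Ax x' j < \<rho> * x' j ^ (m - 1)"
  proof -
    have "Ax x' j \<le> Ax x j" using Ax_le[OF \<open>j < n\<close>] .
    also have "\<dots> < c ^ (m - 1) * (\<rho> * x j ^ (m - 1))" by (rule c(3))
    also have "\<dots> = \<rho> * x' j ^ (m - 1)" by (simp add: x'_def power_mult_distrib)
    finally show ?thesis .
  qed
  have slack_k: "Ax x' k < \<rho> * x' k ^ (m - 1)"
  proof -
    have "x' j < x j" using c x_pos[OF \<open>j < n\<close>] by (simp add: x'_def)
    then have "Ax x' k < Ax x k" using Ax_strict_mono_arc[OF arc] x'_le by blast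
    also have "\<dots> \<le> \<rho> * x' k ^ (m - 1)" using x_sub[OF \<open>k < n\<close>] \<open>k \<noteq> j\<close> by (simp add: x'_def)
    finally show ?thesis .
  qed
  have "subeigen \<rho> x'"
    unfolding subeigen_def
  proof (intro allI impI conjI)
    fix i assume "i < n"
    show "0 < x' i" using x_pos[OF \<open>i < n\<close>] x_pos[OF \<open>j < n\<close>] c by (simp add: x'_def)
    show "Ax x' i \<le> \<rho> * x' i ^ (m - 1)"
      using slack_j Ax_le[OF \<open>i < n\<close>] x_sub[OF \<open>i < n\<close>] by (cases "i = j") (auto simp: x'_def)
  qed
  moreover have "insert k (slack \<rho> x) \<subseteq> slack \<rho> x'"
    using slack_j slack_k Ax_le \<open>k < n\<close> by (fastforce simp: slack_def x'_def)
  ultimately show ?thesis using that by blast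
qed

end

locale weakly_irreducible_tensor = nonneg_tensor +
  assumes dim_pos: "0 < n" and irreducible: "weakly_irreducible m n A"
begin

lemma arc_into_proper_subset:
  assumes "S \<subseteq> {..<n}" "S \<noteq> {}" "S \<noteq> {..<n}"
  obtains a b where "a < n" "a \<notin> S" "b \<in> S" "(a, b) \<in> tensor_arcs m n A"
proof -
  obtain a0 b0 where "a0 < n" "a0 \<notin> S" "b0 \<in> S" using assms by blast
  then have "(a0, b0) \<in> (tensor_arcs m n A)\<^sup>*"
    using irreducible assms(1) unfolding weakly_irreducible_def by blast
  then have "\<exists>a b. a < n \<and> a \<notin> S \<and> b \<in> S \<and> (a, b) \<in> tensor_arcs m n A"
    using \<open>a0 \<notin> S\<close> \<open>b0 \<in> S\<close>
  proof (induction rule: converse_rtrancl_induct)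
    case (step a c)
    then show ?case by (cases "c \<in> S") (auto simp: tensor_arcs_def)
  qed simp
  then show ?thesis using that by blast
qed

lemma subeigen_all_slack:
  assumes "subeigen \<rho> x" "slack \<rho> x \<noteq> {}"
  obtains x' where "subeigen \<rho> x'" "slack \<rho> x' = {..<n}"
proof -
  have "\<exists>x'. subeigen \<rho> x' \<and> slack \<rho> x' = {..<n}"
    using assms
  proof (induction "n - card (slack \<rho> x)" arbitrary: x rule: less_induct)
    case less
    have sub: "slack \<rho> y \<subseteq> {..<n}" for y by (auto simp: slack_def)
    show ?case
    proof (cases "slack \<rho> x = {..<n}")
      case False
      then obtain a b where "a < n" "a \<notin> slack \<rho> x" "b \<in> slack \<rho> x" "(a, b) \<in> tensor_arcs m n A"
        using arc_into_proper_subset[OF sub less.prems(2)] by blast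
      then obtain x' where x': "subeigen \<rho> x'" "insert a (slack \<rho> x) \<subseteq> slack \<rho> x'"
        using subeigen_extend_slack[OF less.prems(1)] by blast
      have "card (slack \<rho> x) < card (slack \<rho> x')"
        using x'(2) \<open>a \<notin> slack \<rho> x\<close> finite_subset[OF sub]
        by (intro psubset_card_mono) auto
      moreover have "card (slack \<rho> x') \<le> n"
        using card_mono[OF _ sub] by simp
      ultimately show ?thesis
        using less.hyps[of x'] x' by fastforce
    qed (use less.prems in blast)
  qed
  then show ?thesis using that by blast
qed

lemma subeigen_all_slack_imp_smaller:
  assumes x: "subeigen \<rho> x" and all: "slack \<rho> x = {..<n}"
  obtains \<rho>' where "\<rho>' < \<rho>" "subeigen \<rho>' x"
proof -
  define \<rho>' where "\<rho>' = Max ((\<lambda>i. Ax x i / x i ^ (m - 1)) ` {..<n})"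
  have x_pos: "0 < x i" if "i < n" for i using x that by (simp add: subeigen_def)
  have "Ax x i / x i ^ (m - 1) < \<rho>" if "i < n" for i
    using all x_pos[OF that] that by (auto simp: slack_def pos_divide_less_eq)
  then have "\<rho>' < \<rho>"
    unfolding \<rho>'_def using dim_pos by (subst Max_less_iff) auto
  moreover have "subeigen \<rho>' x"
    unfolding subeigen_def
  proof (intro allI impI conjI)
    fix i assume "i < n"
    then have "Ax x i / x i ^ (m - 1) \<le> \<rho>'" unfolding \<rho>'_def by (intro Max_ge) auto
    then show "Ax x i \<le> \<rho>' * x i ^ (m - 1)" using x_pos[OF \<open>i < n\<close>] by (simp add: pos_divide_le_eq)
  qed (use x_pos in simp)
  ultimately show ?thesis using that by blast
qed

text \<open>Along an arc \<open>(b, j)\<close> we have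
  \<open>a z\<^sub>j \<le> a\<^sub>b\<^sub>j\<^sub>s \<Prod> z\<^sub>j\<^sub>s \<le> (A z\<^sup>m\<^sup>-\<^sup>1)\<^sub>b \<le> R z\<^sub>b\<^sup>m\<^sup>-\<^sup>1\<close>, as all \<open>z\<^sub>i \<ge> 1\<close>.\<close>
lemma subeigen_path_bound:
  assumes a: "0 < a" "\<And>is. is \<in> tidx m n \<Longrightarrow> A is \<noteq> 0 \<Longrightarrow> a \<le> A is" and "0 \<le> R"
    and z: "subeigen R z" "\<And>i. i < n \<Longrightarrow> 1 \<le> z i" and "i0 < n" "z i0 = 1"
  shows "(i0, j) \<in> tensor_arcs m n A ^^ k \<Longrightarrow> z j \<le> ((\<lambda>b. max b (R * b ^ (m - 1) / a)) ^^ k) 1"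
proof (induction k arbitrary: j)
  case 0
  then show ?case using \<open>z i0 = 1\<close> by simp
next
  case (Suc k)
  define h where "h = (\<lambda>b. max b (R * b ^ (m - 1) / a))"
  from Suc.prems obtain b where b: "(i0, b) \<in> tensor_arcs m n A ^^ k" "(b, j) \<in> tensor_arcs m n A"
    by auto
  then obtain js where js: "b < n" "js \<in> tidx (m - 1) n" "A (b # js) \<noteq> 0" "j \<in> set js"
    unfolding tensor_arcs_def by auto
  have z_nonneg: "0 \<le> z i" if "i < n" for i using z(2)[OF that] by simp
  have "a \<le> A (b # js)" using a(2) js order_ge_2 by (simp add: Cons_in_tidx_iff)
  have "1 \<le> z j" using z(2) js by (auto dest: tidx_set)
  have "a * z j \<le> A (b # js) * prod_list (map z js)"
    using \<open>a \<le> A (b # js)\<close> \<open>1 \<le> z j\<close> member_le_prod_list_map[of js z j] a(1) z(2) js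
    by (intro mult_mono) (auto dest: tidx_set)
  also have "\<dots> \<le> Ax z b"
    unfolding tensor_apply_real_def using js(1,2) z_nonneg
    by (intro member_le_sum mult_nonneg_nonneg entry_nonneg prod_list_nonneg) (auto dest: tidx_set)
  also have "\<dots> \<le> R * z b ^ (m - 1)" using z(1) js(1) by (simp add: subeigen_def)
  also have "\<dots> \<le> R * ((h ^^ k) 1) ^ (m - 1)"
    using Suc.IH[OF b(1)] z_nonneg[OF js(1)] \<open>0 \<le> R\<close> unfolding h_def
    by (simp add: mult_left_mono power_mono)
  finally have "z j \<le> R * ((h ^^ k) 1) ^ (m - 1) / a"
    using a(1) by (simp add: pos_le_divide_eq mult.commute)
  then show ?case by (simp add: h_def)
qed

lemma subeigen_bounded:
  assumes "0 \<le> R"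
  obtains C where
    "\<And>z i0 j. subeigen R z \<Longrightarrow> (\<And>i. i < n \<Longrightarrow> 1 \<le> z i) \<Longrightarrow> i0 < n \<Longrightarrow> z i0 = 1 \<Longrightarrow> j < n \<Longrightarrow> z j \<le> C"
proof -
  define a where "a = Min (insert 1 (A ` {is \<in> tidx m n. A is \<noteq> 0}))"
  have "0 < a"
    using nonneg unfolding a_def tensor_nonneg_def
    by (subst Min_gr_iff) (auto simp: order.strict_iff_order)
  have a_le: "a \<le> A is" if "is \<in> tidx m n" "A is \<noteq> 0" for "is"
    unfolding a_def using that by (intro Min_le) auto
  define h where "h b = max b (R * b ^ (m - 1) / a)" for b
  define path_length where "path_length p = (SOME k. p \<in> tensor_arcs m n A ^^ k)" for p
  define C where "C = Max ((\<lambda>p. (h ^^ path_length p) 1) ` ({..<n} \<times> {..<n}))"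
  have "z j \<le> C" if "subeigen R z" "\<And>i. i < n \<Longrightarrow> 1 \<le> z i" "i0 < n" "z i0 = 1" "j < n" for z i0 j
  proof -
    have "(i0, j) \<in> (tensor_arcs m n A)\<^sup>*"
      using irreducible that(3,5) unfolding weakly_irreducible_def by blast
    then have "(i0, j) \<in> tensor_arcs m n A ^^ path_length (i0, j)"
      unfolding path_length_def rtrancl_power by (rule someI_ex)
    then have "z j \<le> (h ^^ path_length (i0, j)) 1"
      using subeigen_path_bound[OF \<open>0 < a\<close> a_le \<open>0 \<le> R\<close> that(1-4)] unfolding h_def
      by blast
    also have "\<dots> \<le> C" unfolding C_def using that(3,5) by (intro Max_ge) auto
    finally show ?thesis .
  qed
  then show ?thesis using that by blast
qed

lemma subeigen_normalize:
  assumes z: "subeigen r z"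
  obtains z' i0 where "subeigen r z'" "z' \<in> extensional {..<n}" "\<And>i. i < n \<Longrightarrow> 1 \<le> z' i"
    "i0 < n" "z' i0 = 1"
proof -
  define \<mu> where "\<mu> = Min (z ` {..<n})"
  have "\<mu> \<in> z ` {..<n}" unfolding \<mu>_def using dim_pos by (intro Min_in) auto
  then obtain i0 where i0: "i0 < n" "z i0 = \<mu>" by auto
  have "0 < \<mu>" using z i0 by (auto simp: subeigen_def)
  have \<mu>_le: "\<mu> \<le> z i" if "i < n" for i unfolding \<mu>_def using that by auto
  define z' where "z' = restrict (\<lambda>i. z i / \<mu>) {..<n}"
  have Ax_z': "Ax z' i = (1 / \<mu>) ^ (m - 1) * Ax z i" for i
  proof -
    have "Ax z' i = Ax (\<lambda>k. (1 / \<mu>) * z k) i"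
      by (rule tensor_apply_real_cong) (simp add: z'_def)
    also have "\<dots> = (1 / \<mu>) ^ (m - 1) * Ax z i" by (rule tensor_apply_real_smult)
    finally show ?thesis .
  qed
  have "subeigen r z'"
    unfolding subeigen_def
  proof (intro allI impI conjI)
    fix i assume "i < n"
    then have "0 < z i" "Ax z i \<le> r * z i ^ (m - 1)" using z by (auto simp: subeigen_def)
    then show "0 < z' i" using \<open>i < n\<close> \<open>0 < \<mu>\<close> by (simp add: z'_def)
    have "Ax z' i \<le> (1 / \<mu>) ^ (m - 1) * (r * z i ^ (m - 1))"
      unfolding Ax_z' using \<open>Ax z i \<le> _\<close> \<open>0 < \<mu>\<close> by (simp add: mult_left_mono)
    then show "Ax z' i \<le> r * z' i ^ (m - 1)"
      using \<open>i < n\<close> by (simp add: z'_def power_divide)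
  qed
  moreover have "1 \<le> z' i" if "i < n" for i using \<mu>_le[OF that] \<open>0 < \<mu>\<close> that by (simp add: z'_def)
  moreover have "z' i0 = 1" using i0 \<open>0 < \<mu>\<close> by (simp add: z'_def)
  ultimately show ?thesis using that i0(1) by (simp add: z'_def)
qed

text \<open>The Collatz--Wielandt ratio; \<open>max 1\<close> makes it continuous on the whole product space
  and is irrelevant for vectors \<open>\<ge> 1\<close>.\<close>
definition cw_ratio :: "(nat \<Rightarrow> real) \<Rightarrow> real" where
  "cw_ratio x = Max ((\<lambda>i. Ax x i / max 1 (x i) ^ (m - 1)) ` {..<n})"

lemma subeigen_cw_ratio: "(\<And>i. i < n \<Longrightarrow> 1 \<le> x i) \<Longrightarrow> subeigen (cw_ratio x) x"
  unfolding subeigen_def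
proof (intro allI impI conjI)
  fix i assume "\<And>i. i < n \<Longrightarrow> 1 \<le> x i" "i < n"
  then have "1 \<le> x i" by blast
  then show "0 < x i" by simp
  have "Ax x i / x i ^ (m - 1) \<le> cw_ratio x"
    unfolding cw_ratio_def using \<open>i < n\<close> \<open>1 \<le> x i\<close> by (intro Max_ge) (auto simp: max_def)
  then show "Ax x i \<le> cw_ratio x * x i ^ (m - 1)" using \<open>1 \<le> x i\<close> by (simp add: pos_divide_le_eq)
qed

lemma cw_ratio_le:
  assumes "subeigen r x" "\<And>i. i < n \<Longrightarrow> 1 \<le> x i"
  shows "cw_ratio x \<le> r"
proof -
  have "Ax x i / max 1 (x i) ^ (m - 1) \<le> r" if "i < n" for i
    using assms that by (auto simp: subeigen_def max_def pos_divide_le_eq)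
  then show ?thesis unfolding cw_ratio_def using dim_pos by (subst Max_le_iff) auto
qed

lemma continuous_map_cw_ratio:
  "continuous_map (product_topology (\<lambda>_. euclideanreal) {..<n}) euclideanreal cw_ratio"
  unfolding cw_ratio_def[abs_def] using dim_pos
  by (intro continuous_map_Max continuous_map_real_divide continuous_map_Ax continuous_map_real_pow
      continuous_map_real_max continuous_map_product_projection) auto

lemma subeigen_minimum:
  obtains x \<rho> where "subeigen \<rho> x" "\<And>z r. subeigen r z \<Longrightarrow> \<rho> \<le> r"
proof -
  define ones where "ones = restrict (\<lambda>_. 1 :: real) {..<n}"
  define R where "R = cw_ratio ones"
  have ones: "subeigen R ones" unfolding R_def by (rule subeigen_cw_ratio) (simp add: ones_def)
  have "Ax ones 0 \<le> R" using ones dim_pos by (simp add: subeigen_def ones_def)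
  then have "0 \<le> R" using Ax_nonneg[OF dim_pos, of ones] by (simp add: ones_def)
  obtain C where bound: "\<And>z i0 j. subeigen R z \<Longrightarrow> (\<And>i. i < n \<Longrightarrow> 1 \<le> z i) \<Longrightarrow> i0 < n \<Longrightarrow>
      z i0 = 1 \<Longrightarrow> j < n \<Longrightarrow> z j \<le> C"
    using subeigen_bounded[OF \<open>0 \<le> R\<close>] by metis
  define K where "K = PiE {..<n} (\<lambda>_. {1..C})"
  have in_K: "z \<in> K" if "subeigen R z" "z \<in> extensional {..<n}" "\<And>i. i < n \<Longrightarrow> 1 \<le> z i"
    "i0 < n" "z i0 = 1" for z i0
    using bound[OF that(1,3-5)] that(2,3) unfolding K_def PiE_iff by simp
  have "ones \<in> K" using dim_pos by (intro in_K[OF ones]) (auto simp: ones_def)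
  have "compactin (product_topology (\<lambda>_. euclideanreal) {..<n}) K"
    unfolding K_def by (subst compactin_PiE) auto
  then have "compactin euclideanreal (cw_ratio ` K)"
    by (rule image_compactin[OF _ continuous_map_cw_ratio])
  then have "compact (cw_ratio ` K)" by (simp add: compactin_euclidean_iff)
  then obtain s where s: "s \<in> cw_ratio ` K" "\<And>t. t \<in> cw_ratio ` K \<Longrightarrow> s \<le> t"
    using compact_attains_inf[of "cw_ratio ` K"] \<open>ones \<in> K\<close> by auto
  then obtain x where "x \<in> K" "s = cw_ratio x" by auto
  then have x_min: "cw_ratio x \<le> cw_ratio y" if "y \<in> K" for y using s(2) that by simp
  have x_ge_1: "1 \<le> x i" if "i < n" for i using \<open>x \<in> K\<close> that by (simp add: K_def PiE_iff)
  have minimal: "cw_ratio x \<le> r" if z: "subeigen r z" for z r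
  proof (cases "R < r")
    case True
    then show ?thesis using x_min[OF \<open>ones \<in> K\<close>] by (simp add: R_def)
  next
    case False
    obtain z' i0 where z': "subeigen r z'" "z' \<in> extensional {..<n}" "\<And>i. i < n \<Longrightarrow> 1 \<le> z' i"
      "i0 < n" "z' i0 = 1"
      by (rule subeigen_normalize[OF z]) blast
    have "z' \<in> K" using False z' by (intro in_K[OF subeigen_mono[OF z'(1)]]) auto
    then show ?thesis using x_min[of z'] cw_ratio_le[OF z'(1,3)] by linarith
  qed
  show ?thesis using subeigen_cw_ratio[OF x_ge_1] minimal by (rule that)
qed

theorem positive_eigenvector_exists:
  obtains x \<rho> where "\<And>i. i < n \<Longrightarrow> 0 < x i" "\<And>i. i < n \<Longrightarrow> Ax x i = \<rho> * x i ^ (m - 1)"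
proof -
  obtain x \<rho> where x: "subeigen \<rho> x" and minimal: "\<And>z r. subeigen r z \<Longrightarrow> \<rho> \<le> r"
    by (rule subeigen_minimum) blast
  have "slack \<rho> x = {}"
  proof (rule ccontr)
    assume "slack \<rho> x \<noteq> {}"
    with x obtain x' where x': "subeigen \<rho> x'" "slack \<rho> x' = {..<n}"
      by (rule subeigen_all_slack)
    then obtain \<rho>' where "\<rho>' < \<rho>" "subeigen \<rho>' x'"
      by (rule subeigen_all_slack_imp_smaller)
    then show False using minimal[of \<rho>' x'] by simp
  qed
  have "Ax x i = \<rho> * x i ^ (m - 1)" if "i < n" for i
  proof -
    have "i \<notin> slack \<rho> x" using \<open>slack \<rho> x = {}\<close> by simp
    moreover have "Ax x i \<le> \<rho> * x i ^ (m - 1)" using x that by (simp add: subeigen_def)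
    ultimately show ?thesis using that by (simp add: slack_def)
  qed
  moreover have "0 < x i" if "i < n" for i using x that by (simp add: subeigen_def)
  ultimately show ?thesis using that by blast
qed

end

section \<open>Eigenvectors for eigenvalues of maximal modulus\<close>

locale perron_vector = weakly_irreducible_tensor +
  fixes v :: "nat \<Rightarrow> real" and r :: real
  assumes v_pos: "\<And>i. i < n \<Longrightarrow> 0 < v i" and v_0: "v 0 = 1"
    and v_eigen: "\<And>i. i < n \<Longrightarrow> Ax v i = r * v i ^ (m - 1)"
begin

lemma r_nonneg: "0 \<le> r"
  using Ax_nonneg[OF dim_pos, of v] v_pos v_eigen[OF dim_pos] v_0 by (simp add: less_imp_le)

lemma Ax_smult_v: "i < n \<Longrightarrow> Ax (\<lambda>k. t * v k) i = r * (t * v i) ^ (m - 1)"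
  by (simp add: tensor_apply_real_smult v_eigen power_mult_distrib)

lemma eigenvector_max_ratio:
  assumes "is_eigenpair m n A lam y"
  obtains t i0 where "0 < t" "\<And>k. k < n \<Longrightarrow> cmod (y $ k) \<le> t * v k"
    "i0 < n" "cmod (y $ i0) = t * v i0"
proof -
  have y: "y \<in> carrier_vec n" "y \<noteq> 0\<^sub>v n" using assms by (auto simp: is_eigenpair_def)
  have "\<exists>i<n. y $ i \<noteq> 0"
  proof (rule ccontr)
    assume "\<not> (\<exists>i<n. y $ i \<noteq> 0)"
    then have "y = 0\<^sub>v n" using y(1) by (intro eq_vecI) auto
    with y(2) show False ..
  qed
  then obtain i1 where "i1 < n" "y $ i1 \<noteq> 0" by blast
  define t where "t = Max ((\<lambda>k. cmod (y $ k) / v k) ` {..<n})"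
  have "t \<in> (\<lambda>k. cmod (y $ k) / v k) ` {..<n}" unfolding t_def using dim_pos by (intro Max_in) auto
  then obtain i0 where i0: "i0 < n" "cmod (y $ i0) / v i0 = t" by auto
  have le: "cmod (y $ k) \<le> t * v k" if "k < n" for k
  proof -
    have "cmod (y $ k) / v k \<le> t" unfolding t_def using that by (intro Max_ge) auto
    then show ?thesis using v_pos[OF that] by (simp add: pos_divide_le_eq)
  qed
  have "0 < cmod (y $ i1) / v i1" using \<open>y $ i1 \<noteq> 0\<close> v_pos[OF \<open>i1 < n\<close>] by simp
  also have "\<dots> \<le> t" unfolding t_def using \<open>i1 < n\<close> by (intro Max_ge) auto
  finally have "0 < t" .
  show ?thesis
  proof (rule that)
    show "cmod (y $ i0) = t * v i0" using i0 v_pos[OF i0(1)] by (simp add: field_simps)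
  qed (use \<open>0 < t\<close> le i0(1) in auto)
qed

lemma eigenvector_norm_chain:
  assumes y: "is_eigenpair m n A lam y" and t: "\<And>k. k < n \<Longrightarrow> cmod (y $ k) \<le> t * v k" and "i < n"
  shows "cmod lam * cmod (y $ i) ^ (m - 1) \<le> Ax (\<lambda>k. cmod (y $ k)) i"
    and "Ax (\<lambda>k. cmod (y $ k)) i \<le> r * (t * v i) ^ (m - 1)"
proof -
  have "y \<in> carrier_vec n" "tensor_apply m n A y $ i = lam * (y $ i) ^ (m - 1)"
    using y \<open>i < n\<close> by (auto simp: is_eigenpair_iff)
  then show "cmod lam * cmod (y $ i) ^ (m - 1) \<le> Ax (\<lambda>k. cmod (y $ k)) i"
    using norm_tensor_apply_le[OF _ \<open>i < n\<close>] by (metis norm_mult norm_power)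
  have "Ax (\<lambda>k. cmod (y $ k)) i \<le> Ax (\<lambda>k. t * v k) i"
    using t by (intro Ax_mono[OF \<open>i < n\<close>]) auto
  then show "Ax (\<lambda>k. cmod (y $ k)) i \<le> r * (t * v i) ^ (m - 1)"
    using Ax_smult_v[OF \<open>i < n\<close>] by simp
qed

lemma eigenvalue_norm_le:
  assumes "is_eigenpair m n A lam y"
  shows "cmod lam \<le> r"
proof -
  obtain t i0 where t: "0 < t" "\<And>k. k < n \<Longrightarrow> cmod (y $ k) \<le> t * v k" and "i0 < n"
    and i0: "cmod (y $ i0) = t * v i0"
    by (rule eigenvector_max_ratio[OF assms]) blast
  have "cmod lam * (t * v i0) ^ (m - 1) \<le> r * (t * v i0) ^ (m - 1)"
    using eigenvector_norm_chain[OF assms t(2) \<open>i0 < n\<close>] i0 by simp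
  moreover have "0 < (t * v i0) ^ (m - 1)" using t(1) v_pos[OF \<open>i0 < n\<close>] by simp
  ultimately show ?thesis by simp
qed

text \<open>If \<open>|\<lambda>| \<ge> r\<close>, every inequality in the chain is an equality at an index \<open>i\<close> where
  \<open>|y\<^sub>i| = t v\<^sub>i\<close>; termwise equality of the sums passes this to the neighbours of \<open>i\<close>.\<close>
lemma eigenvector_norm_eq_propagates:
  assumes y: "is_eigenpair m n A lam y" "r \<le> cmod lam"
    and t: "0 < t" "\<And>k. k < n \<Longrightarrow> cmod (y $ k) \<le> t * v k"
    and i: "cmod (y $ i) = t * v i" and arc: "(i, j) \<in> tensor_arcs m n A"
  shows "cmod (y $ j) = t * v j"
proof -
  obtain js where js: "i < n" "js \<in> tidx (m - 1) n" "A (i # js) \<noteq> 0" "j \<in> set js"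
    using arc by (auto simp: tensor_arcs_def)
  define a where "a k = cmod (y $ k)" for k
  define f where "f ks = A (i # ks) * prod_list (map a ks)" for ks
  define g where "g ks = A (i # ks) * prod_list (map (\<lambda>k. t * v k) ks)" for ks
  have bound: "0 \<le> a k \<and> a k \<le> t * v k \<and> 0 < t * v k" if "k < n" for k
    using t v_pos[OF that] that by (simp add: a_def)
  have fg: "f ks \<le> g ks" if "ks \<in> tidx (m - 1) n" for ks
    unfolding f_def g_def using that bound js(1)
    by (intro mult_left_mono entry_nonneg prod_list_map_mono) (auto dest: tidx_set)
  have "r * (t * v i) ^ (m - 1) \<le> cmod lam * a i ^ (m - 1)"
    using y(2) i t(1) v_pos[OF js(1)] by (simp add: a_def mult_right_mono)
  also have "\<dots> \<le> Ax a i"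
    unfolding a_def by (rule eigenvector_norm_chain(1)[OF y(1) t(2) js(1)])
  finally have "Ax (\<lambda>k. t * v k) i \<le> Ax a i"
    using Ax_smult_v[OF js(1)] by simp
  then have "sum g (tidx (m - 1) n) \<le> sum f (tidx (m - 1) n)"
    unfolding tensor_apply_real_def f_def g_def .
  then have "sum f (tidx (m - 1) n) = sum g (tidx (m - 1) n)"
    using sum_mono[of "tidx (m - 1) n" f g] fg by simp
  from sum_mono_eq_imp_eq[OF finite_tidx fg this js(2)] have "f js = g js" .
  then have "prod_list (map a js) = prod_list (map (\<lambda>k. t * v k) js)"
    using js(3) by (simp add: f_def g_def)
  then have "a j = t * v j"
    using bound js prod_list_map_eq_imp_eq[of js a "\<lambda>k. t * v k" j] by (auto dest: tidx_set)
  then show ?thesis by (simp add: a_def)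
qed

lemma eigenvector_norm_proportional:
  assumes "is_eigenpair m n A lam y" "r \<le> cmod lam"
  obtains t where "0 < t" "\<And>i. i < n \<Longrightarrow> cmod (y $ i) = t * v i"
proof -
  obtain t i0 where t: "0 < t" "\<And>k. k < n \<Longrightarrow> cmod (y $ k) \<le> t * v k" and "i0 < n"
    and i0: "cmod (y $ i0) = t * v i0"
    by (rule eigenvector_max_ratio[OF assms(1)]) blast
  have "cmod (y $ j) = t * v j" if "j < n" for j
  proof -
    have "(i0, j) \<in> (tensor_arcs m n A)\<^sup>*"
      using irreducible \<open>i0 < n\<close> that unfolding weakly_irreducible_def by blast
    then show ?thesis
    proof (induction rule: rtrancl_induct)
      case (step j k)
      show ?case by (rule eigenvector_norm_eq_propagates[OF assms t step.IH step.hyps(2)])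
    qed (rule i0)
  qed
  with t(1) show ?thesis by (rule that)
qed

lemma eigenvector_sgn:
  assumes "0 < t" "\<And>i. i < n \<Longrightarrow> cmod (y $ i) = t * v i" and "k < n"
  shows "y $ k = of_real t * (of_real (v k) * sgn (y $ k))" and "cmod (sgn (y $ k)) = 1"
proof -
  have "y $ k = of_real (cmod (y $ k)) * sgn (y $ k)" by (rule of_real_norm_mult_sgn[symmetric])
  then show "y $ k = of_real t * (of_real (v k) * sgn (y $ k))"
    by (simp add: assms(2)[OF \<open>k < n\<close>] mult.assoc)
  show "cmod (sgn (y $ k)) = 1"
    using assms(1) assms(2)[OF \<open>k < n\<close>] v_pos[OF \<open>k < n\<close>] by (auto simp: norm_sgn)
qed

text \<open>Row \<open>i\<close> of the eigenvalue equation, divided by \<open>t\<^sup>m\<^sup>-\<^sup>1\<close>.\<close>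
lemma eigenvector_sgn_sum:
  assumes y: "is_eigenpair m n A (of_real r * \<omega>) y"
    and t: "0 < t" "\<And>i. i < n \<Longrightarrow> cmod (y $ i) = t * v i" and i: "i < n"
  shows "(\<Sum>ks\<in>tidx (m - 1) n. of_real (A (i # ks) * prod_list (map v ks)) *
            prod_list (map (\<lambda>k. sgn (y $ k)) ks)) =
    of_real (\<Sum>ks\<in>tidx (m - 1) n. A (i # ks) * prod_list (map v ks)) * (\<omega> * sgn (y $ i) ^ (m - 1))"
    (is "?S = _")
proof -
  define u where "u = (\<lambda>k. sgn (y $ k))"
  have y_eq: "y $ k = of_real t * (of_real (v k) * u k)" if "k < n" for k
    unfolding u_def by (rule eigenvector_sgn(1)[OF t that])
  have prod_y: "prod_list (map (\<lambda>k. y $ k) ks) =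
      of_real t ^ (m - 1) * (of_real (prod_list (map v ks)) * prod_list (map u ks))"
    if "ks \<in> tidx (m - 1) n" for ks
  proof -
    have "prod_list (map (\<lambda>k. y $ k) ks) =
        prod_list (map (\<lambda>k. of_real t * (of_real (v k) * u k)) ks)"
      using that y_eq by (intro arg_cong[where f = prod_list] map_cong) (auto dest: tidx_set)
    then show ?thesis
      by (simp add: prod_list_map_const_mult prod_list_map_mult of_real_prod_list_map
          tidx_length[OF that])
  qed
  have "of_real t ^ (m - 1) * ?S = tensor_apply m n A y $ i"
    unfolding tensor_apply_nth[OF i] sum_distrib_left u_def[symmetric]
    by (intro sum.cong refl) (simp add: prod_y ac_simps)
  also have "\<dots> = of_real r * \<omega> * (y $ i) ^ (m - 1)"
    using y i by (simp add: is_eigenpair_iff)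
  also have "\<dots> = of_real t ^ (m - 1) * (of_real (Ax v i) * (\<omega> * u i ^ (m - 1)))"
    unfolding v_eigen[OF i] y_eq[OF i] by (simp add: power_mult_distrib ac_simps)
  finally show ?thesis
    using t(1) by (simp add: tensor_apply_real_def u_def)
qed

lemma eigenvector_phases_compatible:
  assumes y: "is_eigenpair m n A (of_real r * \<omega>) y" and \<omega>: "cmod \<omega> = 1"
    and t: "0 < t" "\<And>i. i < n \<Longrightarrow> cmod (y $ i) = t * v i"
  shows "phase_compatible m n A \<omega> (\<lambda>k. sgn (y $ k))"
  unfolding phase_compatible_def
proof (intro allI impI)
  fix i js assume "i # js \<in> tidx m n" "A (i # js) \<noteq> 0"
  then have i: "i < n" and js: "js \<in> tidx (m - 1) n"
    using order_ge_2 by (auto simp: Cons_in_tidx_iff)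
  define c where "c ks = A (i # ks) * prod_list (map v ks)" for ks
  define P where "P ks = prod_list (map (\<lambda>k. sgn (y $ k)) ks)" for ks
  have "0 \<le> c ks" if "ks \<in> tidx (m - 1) n" for ks
    using that i v_pos unfolding c_def
    by (intro mult_nonneg_nonneg entry_nonneg prod_list_nonneg)
      (auto dest: tidx_set intro: less_imp_le)
  moreover have "cmod (P ks) = 1" if "ks \<in> tidx (m - 1) n" for ks
  proof -
    have unimodular: "map (\<lambda>k. cmod (sgn (y $ k))) ks = map (\<lambda>_. 1) ks"
      using that eigenvector_sgn(2)[OF t] by (intro map_cong) (auto dest: tidx_set)
    show ?thesis unfolding P_def norm_prod_list_map unimodular by (simp add: map_replicate_const)
  qed
  moreover have "cmod (\<omega> * sgn (y $ i) ^ (m - 1)) = 1"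
    using \<omega> eigenvector_sgn(2)[OF t i] by (simp add: norm_mult norm_power)
  moreover have "0 < c js"
    using entry_nonneg[OF i js] \<open>A (i # js) \<noteq> 0\<close> v_pos js
    by (auto simp: c_def intro!: mult_pos_pos prod_list_map_pos dest: tidx_set)
  moreover have "(\<Sum>ks\<in>tidx (m - 1) n. of_real (c ks) * P ks) =
      of_real (\<Sum>ks\<in>tidx (m - 1) n. c ks) * (\<omega> * sgn (y $ i) ^ (m - 1))"
    unfolding c_def P_def by (rule eigenvector_sgn_sum[OF y t i])
  ultimately have "P js = \<omega> * sgn (y $ i) ^ (m - 1)"
    by (intro unimodular_sum_eq_imp_eq[OF finite_tidx _ _ _ _ js]) auto
  then show "prod_list (map (\<lambda>k. sgn (y $ k)) js) = \<omega> * sgn (y $ i) ^ (m - 1)"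
    by (simp add: P_def)
qed

lemma normalized_eigenvectors_eq:
  assumes "cmod \<omega> = 1"
  shows "{y. is_eigenpair m n A (of_real r * \<omega>) y \<and> y $ 0 = 1} =
    phase_vec n v ` admissible_phases m n A \<omega>"
proof (intro equalityI subsetI)
  fix y assume "y \<in> phase_vec n v ` admissible_phases m n A \<omega>"
  then obtain u where u: "u \<in> admissible_phases m n A \<omega>" and y: "y = phase_vec n v u" by blast
  have "is_eigenpair m n A (of_real r * \<omega>) y"
    unfolding y using u
    by (intro phase_vec_eigenpair[OF dim_pos v_pos v_eigen]) (auto simp: admissible_phases_def)
  moreover have "y $ 0 = 1" using u dim_pos v_0 by (simp add: y phase_vec_nth admissible_phases_def)
  ultimately show "y \<in> {y. is_eigenpair m n A (of_real r * \<omega>) y \<and> y $ 0 = 1}" by blast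
next
  fix y assume "y \<in> {y. is_eigenpair m n A (of_real r * \<omega>) y \<and> y $ 0 = 1}"
  then have y: "is_eigenpair m n A (of_real r * \<omega>) y" and "y $ 0 = 1" by auto
  have "r \<le> cmod (of_real r * \<omega>)" using assms r_nonneg by (simp add: norm_mult)
  then obtain t where t: "0 < t" "\<And>i. i < n \<Longrightarrow> cmod (y $ i) = t * v i"
    by (rule eigenvector_norm_proportional[OF y]) blast
  have "t = 1" using t(2)[OF dim_pos] \<open>y $ 0 = 1\<close> v_0 by simp
  define u where "u k = sgn (y $ k)" for k
  have "y $ i \<noteq> 0" if "i < n" for i using t(1) t(2)[OF that] v_pos[OF that] by auto
  then have "u \<in> admissible_phases m n A \<omega>"
    unfolding admissible_phases_def u_def
    using eigenvector_phases_compatible[OF y assms t] \<open>y $ 0 = 1\<close> by (auto simp: norm_sgn)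
  moreover have "y = phase_vec n v u"
  proof (rule eq_vecI)
    show "dim_vec y = dim_vec (phase_vec n v u)"
      using y by (simp add: is_eigenpair_def phase_vec_def)
    fix i assume "i < dim_vec (phase_vec n v u)"
    then have "i < n" by (simp add: phase_vec_def)
    then show "y $ i = phase_vec n v u $ i"
      using of_real_norm_mult_sgn[of "y $ i"] t(2) \<open>t = 1\<close> by (simp add: phase_vec_nth u_def)
  qed
  ultimately show "y \<in> phase_vec n v ` admissible_phases m n A \<omega>" by blast
qed

lemma r_eigenvalue: "of_real r \<in> eigenvalues m n A"
proof -
  have "phase_vec n v (\<lambda>_. 1) \<in> {y. is_eigenpair m n A (of_real r * 1) y \<and> y $ 0 = 1}"
    using normalized_eigenvectors_eq[of 1] admissible_phases_one by simp
  then show ?thesis unfolding eigenvalues_def by auto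
qed

lemma spec_radius_eq: "spec_radius m n A = r"
  unfolding spec_radius_def
proof (rule cSup_eq_maximum)
  show "r \<in> cmod ` eigenvalues m n A" using r_eigenvalue r_nonneg by force
qed (auto simp: eigenvalues_def intro: eigenvalue_norm_le)

lemma PVj_eq: "PVj m n A l j = phase_vec n v ` admissible_phases m n A (unit_root l j)"
  unfolding PVj_def lam_j_def spec_radius_eq unit_root_def[symmetric]
  using normalized_eigenvectors_eq[OF norm_unit_root] by simp

lemma vp_eq: "vp m n A l = phase_vec n v (\<lambda>_. 1)"
  unfolding vp_def
proof (rule the_equality)
  show "phase_vec n v (\<lambda>_. 1) \<in> PVj m n A l 0 \<and>
      (\<forall>i<n. phase_vec n v (\<lambda>_. 1) $ i \<in> \<real> \<and> 0 < Re (phase_vec n v (\<lambda>_. 1) $ i))"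
    using admissible_phases_one v_pos by (auto simp: PVj_eq phase_vec_nth)
next
  fix y assume y: "y \<in> PVj m n A l 0 \<and> (\<forall>i<n. y $ i \<in> \<real> \<and> 0 < Re (y $ i))"
  then obtain u where u: "u \<in> admissible_phases m n A 1" and y_eq: "y = phase_vec n v u"
    by (auto simp: PVj_eq)
  have "u i = 1" if "i < n" for i
  proof -
    have "u i = y $ i / of_real (v i)" using v_pos[OF that] that by (simp add: y_eq phase_vec_nth)
    then have "u i \<in> \<real>" "0 < Re (u i)" using y v_pos[OF that] that by (auto simp: Re_divide_of_real)
    moreover have "cmod (u i) = 1" using u that by (rule admissible_phases_unimodular)
    ultimately show ?thesis
      by (metis Reals_cases Re_complex_of_real abs_of_pos norm_of_real of_real_1)
  qed
  then show "y = phase_vec n v (\<lambda>_. 1)" unfolding y_eq by (rule phase_vec_cong)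
qed

lemma circ_phase_vec:
  assumes "\<And>i. i < n \<Longrightarrow> cmod (a i) = 1" "\<And>i. i < n \<Longrightarrow> cmod (b i) = 1"
  shows "circ m n A l (phase_vec n v a) (phase_vec n v b) = phase_vec n v (\<lambda>i. a i * b i)"
proof -
  have "Dy n (phase_vec n v a) = diag_of n a" "Dy n (phase_vec n v b) = diag_of n b"
    by (rule Dy_phase_vec; simp add: v_pos assms)+
  then show ?thesis
    unfolding circ_def vp_eq by (simp add: phase_vec_def diag_of_mult_vec ac_simps)
qed

text \<open>\<open>v\<^sub>i |d\<^sub>i|\<close> is again a positive eigenvector for \<open>r\<close>, hence a multiple of \<open>v\<close>.\<close>
lemma phase_compatible_unimodular:
  assumes d: "phase_compatible m n A \<omega> d" "\<And>k. k < n \<Longrightarrow> d k \<noteq> 0" "d 0 = 1" and "cmod \<omega> = 1" "k < n"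
  shows "cmod (d k) = 1"
proof -
  define s where "s k = (of_real (cmod (d k)) :: complex)" for k
  have "phase_compatible m n A 1 s"
    using d(1) \<open>cmod \<omega> = 1\<close> unfolding phase_compatible_def s_def
    by (auto simp flip: of_real_prod_list_map norm_prod_list_map simp: norm_mult norm_power)
  then have "is_eigenpair m n A (of_real r * 1) (phase_vec n v s)"
    using d(3) by (intro phase_vec_eigenpair[OF dim_pos v_pos v_eigen]) (auto simp: s_def)
  moreover have "r \<le> cmod (of_real r * 1 :: complex)" using r_nonneg by simp
  ultimately obtain t where t: "\<And>i. i < n \<Longrightarrow> cmod (phase_vec n v s $ i) = t * v i"
    by (rule eigenvector_norm_proportional) blast
  have s_eq: "cmod (d i) = t" if "i < n" for i
    using t[OF that] v_pos[OF that] that by (simp add: phase_vec_nth s_def norm_mult)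
  then show ?thesis using s_eq[OF dim_pos] s_eq[OF \<open>k < n\<close>] d(3) by simp
qed

lemma Dset_eq: "Dset m n A l j = diag_of n ` admissible_phases m n A (unit_root l j)"
proof (intro equalityI subsetI)
  fix D assume "D \<in> diag_of n ` admissible_phases m n A (unit_root l j)"
  then obtain u where u: "u \<in> admissible_phases m n A (unit_root l j)" and D: "D = diag_of n u"
    by blast
  have u_nonzero: "u k \<noteq> 0" if "k < n" for k using admissible_phases_unimodular[OF u that] by auto
  have PQ_eq: "tensor_PQ (\<lambda>i. inverse (D $$ (i, i) ^ (m - 1))) A (\<lambda>i. D $$ (i, i)) is =
      tensor_PQ (\<lambda>i. inverse (u i ^ (m - 1))) A u is" if is_in: "is \<in> tidx m n" for "is"
  proof -
    obtain i js where "is = i # js" "i < n" "js \<in> tidx (m - 1) n"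
      using tidx_ConsE[OF is_in order_pos] by blast
    then show ?thesis
      unfolding tensor_PQ_def D
      by (auto simp: diag_of_nth intro!: arg_cong[where f = prod_list] map_cong dest: tidx_set)
  qed
  have "phase_compatible m n A (unit_root l j) u" using u by (simp add: admissible_phases_def)
  then have "\<forall>is \<in> tidx m n. of_real (A is) =
      cis (- 2 * pi * real j / real l) * tensor_PQ (\<lambda>i. inverse (u i ^ (m - 1))) A u is"
    using Dset_identity_iff_phase_compatible[of m n u A j l] order_ge_2 u_nonzero by simp
  moreover have "D $$ (0, 0) = 1" using u dim_pos by (simp add: D diag_of_nth admissible_phases_def)
  ultimately show "D \<in> Dset m n A l j"
    using PQ_eq u_nonzero unfolding Dset_def
    by (simp add: D diagonal_mat_diag_of invertible_diag_of)
next
  fix D assume "D \<in> Dset m n A l j"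
  then have D: "D \<in> carrier_mat n n" "diagonal_mat D" "invertible_mat D" "D $$ (0, 0) = 1"
    and identity: "\<forall>is \<in> tidx m n. of_real (A is) = cis (- 2 * pi * real j / real l) *
      tensor_PQ (\<lambda>i. inverse ((D $$ (i, i)) ^ (m - 1))) A (\<lambda>i. D $$ (i, i)) is"
    unfolding Dset_def by auto
  define d where "d = (\<lambda>k. D $$ (k, k))"
  have d_nonzero: "d k \<noteq> 0" if "k < n" for k
    unfolding d_def by (rule invertible_diagonal_mat_entry_nonzero[OF D(1-3) that])
  have "phase_compatible m n A (unit_root l j) d"
    using identity order_pos d_nonzero Dset_identity_iff_phase_compatible[of m n d A j l]
    by (simp add: d_def)
  moreover have "cmod (d k) = 1" if "k < n" for k
    using phase_compatible_unimodular[OF \<open>phase_compatible _ _ _ _ d\<close> d_nonzero _ norm_unit_root that]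
      D(4)
    by (simp add: d_def)
  ultimately have "d \<in> admissible_phases m n A (unit_root l j)"
    unfolding admissible_phases_def using D(4) by (simp add: d_def)
  moreover have "D = diag_of n d" unfolding d_def by (rule diagonal_mat_eq_diag_of[OF D(1,2)])
  ultimately show "D \<in> diag_of n ` admissible_phases m n A (unit_root l j)" by blast
qed

end

lemma (in weakly_irreducible_tensor) perron_vector_exists:
  obtains v r where "perron_vector m n A v r"
proof -
  obtain x \<rho> where x: "\<And>i. i < n \<Longrightarrow> 0 < x i" "\<And>i. i < n \<Longrightarrow> Ax x i = \<rho> * x i ^ (m - 1)"
    by (rule positive_eigenvector_exists) blast
  define v where "v = (\<lambda>k. (1 / x 0) * x k)"
  have "0 < x 0" using x(1) dim_pos by simp
  have "Ax v i = \<rho> * v i ^ (m - 1)" if "i < n" for i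
  proof -
    have "Ax v i = (1 / x 0) ^ (m - 1) * Ax x i" unfolding v_def by (rule tensor_apply_real_smult)
    then show ?thesis using x(2)[OF that] by (simp add: v_def power_divide)
  qed
  moreover have "0 < v i" if "i < n" for i using x(1)[OF that] \<open>0 < x 0\<close> by (simp add: v_def)
  moreover have "v 0 = 1" using \<open>0 < x 0\<close> by (simp add: v_def)
  ultimately have "perron_vector m n A v \<rho>" by unfold_locales
  then show ?thesis by (rule that)
qed

section \<open>The group of normalised eigenvectors\<close>

locale spectrally_symmetric_perron = perron_vector +
  fixes l :: nat
  assumes period_pos: "0 < l" and spectral_symmetric: "spectral_sym m n A l"
begin

lemma eigenvalue_unit_root: "of_real r * unit_root l j \<in> eigenvalues m n A"
proof (induction j)
  case 0
  then show ?case using r_eigenvalue by simp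
next
  case (Suc j)
  have "unit_root l (Suc j) = cis (2 * pi / real l) * unit_root l j"
    using unit_root_add[of l 1 j] by (simp add: unit_root_def)
  then show ?case
    using Suc spectral_symmetric unfolding spectral_sym_def by (auto simp: ac_simps)
qed

lemma admissible_phases_nonempty: "admissible_phases m n A (unit_root l j) \<noteq> {}"
proof -
  obtain y where y: "is_eigenpair m n A (of_real r * unit_root l j) y"
    using eigenvalue_unit_root unfolding eigenvalues_def by blast
  have "r \<le> cmod (of_real r * unit_root l j)" using r_nonneg by (simp add: norm_mult)
  then obtain t where t: "0 < t" "\<And>i. i < n \<Longrightarrow> cmod (y $ i) = t * v i"
    by (rule eigenvector_norm_proportional[OF y]) blast
  then have "y $ 0 \<noteq> 0" using t(2)[OF dim_pos] v_pos[OF dim_pos] by auto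
  moreover have "y \<in> carrier_vec n" using y by (simp add: is_eigenpair_def)
  ultimately have "is_eigenpair m n A (of_real r * unit_root l j) ((1 / y $ 0) \<cdot>\<^sub>v y)"
    "((1 / y $ 0) \<cdot>\<^sub>v y) $ 0 = 1"
    using is_eigenpair_smult[OF y] dim_pos by auto
  then have "(1 / y $ 0) \<cdot>\<^sub>v y \<in> phase_vec n v ` admissible_phases m n A (unit_root l j)"
    using normalized_eigenvectors_eq[OF norm_unit_root] by blast
  then show ?thesis by blast
qed

definition symmetry_phases :: "(nat \<Rightarrow> complex) set" where
  "symmetry_phases = (\<Union>j<l. admissible_phases m n A (unit_root l j))"

lemma symmetry_phases_unimodular: "a \<in> symmetry_phases \<Longrightarrow> i < n \<Longrightarrow> cmod (a i) = 1"
  unfolding symmetry_phases_def by (auto intro: admissible_phases_unimodular)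

lemma symmetry_phases_one: "(\<lambda>_. 1) \<in> symmetry_phases"
  unfolding symmetry_phases_def using admissible_phases_one period_pos by force

lemma symmetry_phases_mult:
  assumes "a \<in> symmetry_phases" "b \<in> symmetry_phases"
  shows "(\<lambda>i. a i * b i) \<in> symmetry_phases"
proof -
  obtain j k where "a \<in> admissible_phases m n A (unit_root l j)"
    "b \<in> admissible_phases m n A (unit_root l k)"
    using assms unfolding symmetry_phases_def by blast
  then have "(\<lambda>i. a i * b i) \<in> admissible_phases m n A (unit_root l j * unit_root l k)"
    by (rule admissible_phases_mult)
  also have "unit_root l j * unit_root l k = unit_root l ((j + k) mod l)"
    by (simp add: unit_root_add unit_root_mod[OF period_pos])
  finally show ?thesis unfolding symmetry_phases_def using period_pos by auto
qed

lemma symmetry_phases_cnj: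
  assumes "a \<in> symmetry_phases"
  shows "(\<lambda>i. cnj (a i)) \<in> symmetry_phases"
proof -
  obtain j where "j < l" "a \<in> admissible_phases m n A (unit_root l j)"
    using assms unfolding symmetry_phases_def by blast
  then have "(\<lambda>i. cnj (a i)) \<in> admissible_phases m n A (cnj (unit_root l j))"
    by (intro admissible_phases_cnj)
  also have "cnj (unit_root l j) = unit_root l ((l - j) mod l)"
    using \<open>j < l\<close> by (simp add: cnj_unit_root unit_root_mod[OF period_pos])
  finally show ?thesis unfolding symmetry_phases_def using period_pos by auto
qed

lemma PV_eq: "PV m n A l = phase_vec n v ` symmetry_phases"
  unfolding PV_def symmetry_phases_def PVj_eq by blast

lemma Dall_eq: "Dall m n A l = diag_of n ` symmetry_phases"
  unfolding Dall_def symmetry_phases_def Dset_eq by blast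

lemma PV_group_simps:
  "carrier (PV_group m n A l) = phase_vec n v ` symmetry_phases"
  "x \<otimes>\<^bsub>PV_group m n A l\<^esub> y = circ m n A l x y"
  "\<one>\<^bsub>PV_group m n A l\<^esub> = phase_vec n v (\<lambda>_. 1)"
  unfolding PV_group_def by (simp_all add: PV_eq vp_eq)

lemma circ_symmetry_phases:
  "a \<in> symmetry_phases \<Longrightarrow> b \<in> symmetry_phases \<Longrightarrow>
    circ m n A l (phase_vec n v a) (phase_vec n v b) = phase_vec n v (\<lambda>i. a i * b i)"
  by (intro circ_phase_vec) (auto intro: symmetry_phases_unimodular)

lemma phase_vec_cnj_mult:
  "a \<in> symmetry_phases \<Longrightarrow> phase_vec n v (\<lambda>i. cnj (a i) * a i) = phase_vec n v (\<lambda>_. 1)"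
  by (intro phase_vec_cong) (simp add: symmetry_phases_unimodular mult.commute unimodular_mult_cnj)

lemma comm_group_PV_group: "comm_group (PV_group m n A l)"
proof (rule comm_groupI, unfold PV_group_simps)
  fix x y assume "x \<in> phase_vec n v ` symmetry_phases" "y \<in> phase_vec n v ` symmetry_phases"
  then show "circ m n A l x y \<in> phase_vec n v ` symmetry_phases"
    by (auto simp: circ_symmetry_phases intro: symmetry_phases_mult)
next
  fix x y z assume "x \<in> phase_vec n v ` symmetry_phases" "y \<in> phase_vec n v ` symmetry_phases"
    "z \<in> phase_vec n v ` symmetry_phases"
  then show "circ m n A l (circ m n A l x y) z = circ m n A l x (circ m n A l y z)"
    by (auto simp: circ_symmetry_phases symmetry_phases_mult mult.assoc)
next
  fix x y assume "x \<in> phase_vec n v ` symmetry_phases" "y \<in> phase_vec n v ` symmetry_phases"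
  then show "circ m n A l x y = circ m n A l y x"
    by (auto simp: circ_symmetry_phases mult.commute)
next
  fix x assume "x \<in> phase_vec n v ` symmetry_phases"
  then show "circ m n A l (phase_vec n v (\<lambda>_. 1)) x = x"
    by (auto simp: circ_symmetry_phases symmetry_phases_one)
next
  fix x assume "x \<in> phase_vec n v ` symmetry_phases"
  then obtain a where a: "a \<in> symmetry_phases" "x = phase_vec n v a" by blast
  then have "circ m n A l (phase_vec n v (\<lambda>i. cnj (a i))) x = phase_vec n v (\<lambda>_. 1)"
    by (simp add: circ_symmetry_phases symmetry_phases_cnj phase_vec_cnj_mult)
  then show "\<exists>y \<in> phase_vec n v ` symmetry_phases. circ m n A l y x = phase_vec n v (\<lambda>_. 1)"
    using symmetry_phases_cnj[OF a(1)] by blast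
qed (use symmetry_phases_one in blast)

sublocale PV: comm_group "PV_group m n A l"
  by (rule comm_group_PV_group)

lemma PV_inv_phase_vec:
  "a \<in> symmetry_phases \<Longrightarrow> inv\<^bsub>PV_group m n A l\<^esub> (phase_vec n v a) = phase_vec n v (\<lambda>i. cnj (a i))"
  by (rule PV.inv_equality)
    (auto simp: PV_group_simps circ_symmetry_phases symmetry_phases_cnj phase_vec_cnj_mult)

lemma admissible_phases_1_subset: "admissible_phases m n A 1 \<subseteq> symmetry_phases"
  unfolding symmetry_phases_def using period_pos by force

lemma PVj_0_subgroup: "subgroup (PVj m n A l 0) (PV_group m n A l)"
proof (rule PV.subgroupI)
  show "PVj m n A l 0 \<subseteq> carrier (PV_group m n A l)"
    using admissible_phases_1_subset by (auto simp: PVj_eq PV_group_simps)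
  show "PVj m n A l 0 \<noteq> {}" using admissible_phases_one[of m n A] by (auto simp: PVj_eq)
next
  fix x assume "x \<in> PVj m n A l 0"
  then obtain a where "a \<in> admissible_phases m n A 1" "x = phase_vec n v a" by (auto simp: PVj_eq)
  then show "inv\<^bsub>PV_group m n A l\<^esub> x \<in> PVj m n A l 0"
    using admissible_phases_cnj admissible_phases_1_subset
    by (force simp: PVj_eq PV_inv_phase_vec)
next
  fix x y assume "x \<in> PVj m n A l 0" "y \<in> PVj m n A l 0"
  then obtain a b where "a \<in> admissible_phases m n A 1" "x = phase_vec n v a"
    "b \<in> admissible_phases m n A 1" "y = phase_vec n v b" by (auto simp: PVj_eq)
  moreover have "a \<in> symmetry_phases" "b \<in> symmetry_phases"
    using calculation admissible_phases_1_subset by blast+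
  ultimately show "x \<otimes>\<^bsub>PV_group m n A l\<^esub> y \<in> PVj m n A l 0"
    using admissible_phases_mult[of a m n A 1 b 1]
    by (auto simp: PVj_eq PV_group_simps circ_symmetry_phases)
qed

text \<open>For a fixed \<open>a \<in> PV\<^sub>j\<close>, dividing by the phases of \<open>a\<close> maps \<open>PV\<^sub>j\<close> onto \<open>PV\<^sub>0\<close>.\<close>
lemma PVj_rcoset:
  assumes "j < l"
  shows "PVj m n A l j \<in> rcosets\<^bsub>PV_group m n A l\<^esub> PVj m n A l 0"
proof -
  obtain a where a: "a \<in> admissible_phases m n A (unit_root l j)"
    using admissible_phases_nonempty by blast
  have "a \<in> symmetry_phases" unfolding symmetry_phases_def using a assms by blast
  have "PVj m n A l j = PVj m n A l 0 #>\<^bsub>PV_group m n A l\<^esub> phase_vec n v a"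
  proof (intro equalityI subsetI)
    fix x assume "x \<in> PVj m n A l j"
    then obtain b where b: "b \<in> admissible_phases m n A (unit_root l j)"
      and x: "x = phase_vec n v b"
      by (auto simp: PVj_eq)
    define c where "c i = b i * cnj (a i)" for i
    have "c \<in> admissible_phases m n A (unit_root l j * cnj (unit_root l j))"
      unfolding c_def using admissible_phases_mult[OF b admissible_phases_cnj[OF a]] .
    then have c: "c \<in> admissible_phases m n A 1"
      using unimodular_mult_cnj[OF norm_unit_root] by simp
    have "phase_vec n v (\<lambda>i. c i * a i) = x"
      unfolding x c_def using admissible_phases_unimodular[OF a]
      by (intro phase_vec_cong)
        (simp add: unimodular_mult_cnj mult.assoc[symmetric] mult.commute[of _ "a _"])
    then have "x = phase_vec n v c \<otimes>\<^bsub>PV_group m n A l\<^esub> phase_vec n v a"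
      using admissible_phases_1_subset c \<open>a \<in> symmetry_phases\<close>
      by (auto simp: PV_group_simps circ_symmetry_phases)
    then show "x \<in> PVj m n A l 0 #>\<^bsub>PV_group m n A l\<^esub> phase_vec n v a"
      using c unfolding r_coset_def PVj_eq unit_root_0 by blast
  next
    fix x assume "x \<in> PVj m n A l 0 #>\<^bsub>PV_group m n A l\<^esub> phase_vec n v a"
    then obtain c where c: "c \<in> admissible_phases m n A 1"
      and x: "x = phase_vec n v c \<otimes>\<^bsub>PV_group m n A l\<^esub> phase_vec n v a"
      unfolding r_coset_def PVj_eq unit_root_0 by blast
    have "x = phase_vec n v (\<lambda>i. c i * a i)"
      using x c admissible_phases_1_subset \<open>a \<in> symmetry_phases\<close>
      by (auto simp: PV_group_simps circ_symmetry_phases)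
    moreover have "(\<lambda>i. c i * a i) \<in> admissible_phases m n A (unit_root l j)"
      using admissible_phases_mult[OF c a] by simp
    ultimately show "x \<in> PVj m n A l j" by (auto simp: PVj_eq)
  qed
  moreover have "phase_vec n v a \<in> carrier (PV_group m n A l)"
    using \<open>a \<in> symmetry_phases\<close> by (simp add: PV_group_simps)
  ultimately show ?thesis unfolding RCOSETS_def by blast
qed

lemma Dy_symmetry_phases: "a \<in> symmetry_phases \<Longrightarrow> Dy n (phase_vec n v a) = diag_of n a"
  by (rule Dy_phase_vec) (simp_all add: v_pos symmetry_phases_unimodular)

lemma Dy_iso: "Dy n \<in> iso (PV_group m n A l) (D_group m n A l)"
  unfolding iso_def hom_def
proof (intro CollectI conjI ballI)
  have D_carrier: "carrier (D_group m n A l) = diag_of n ` symmetry_phases"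
    by (simp add: D_group_def Dall_eq)
  show "Dy n \<in> carrier (PV_group m n A l) \<rightarrow> carrier (D_group m n A l)"
    by (auto simp: PV_group_simps D_carrier Dy_symmetry_phases)
  fix x y assume "x \<in> carrier (PV_group m n A l)" "y \<in> carrier (PV_group m n A l)"
  then show "Dy n (x \<otimes>\<^bsub>PV_group m n A l\<^esub> y) = Dy n x \<otimes>\<^bsub>D_group m n A l\<^esub> Dy n y"
    by (auto simp: PV_group_simps D_group_def circ_symmetry_phases Dy_symmetry_phases
        symmetry_phases_mult diag_of_mult)
next
  have "inj_on (Dy n) (phase_vec n v ` symmetry_phases)"
  proof (rule inj_onI)
    fix x y assume "x \<in> phase_vec n v ` symmetry_phases" "y \<in> phase_vec n v ` symmetry_phases"
      and "Dy n x = Dy n y"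
    then obtain a b
      where xy: "x = phase_vec n v a" "y = phase_vec n v b" "diag_of n a = diag_of n b"
      by (auto simp: Dy_symmetry_phases)
    have "phase_vec n v a = phase_vec n v b"
      by (rule phase_vec_cong) (rule diag_of_eq_imp_eq[OF xy(3)])
    with xy show "x = y" by simp
  qed
  moreover have "Dy n ` phase_vec n v ` symmetry_phases = diag_of n ` symmetry_phases"
    unfolding image_image by (intro image_cong refl Dy_symmetry_phases)
  ultimately show "bij_betw (Dy n) (carrier (PV_group m n A l)) (carrier (D_group m n A l))"
    unfolding bij_betw_def by (simp add: PV_group_simps D_group_def Dall_eq)
qed

lemma Dy_image_PVj: "j < l \<Longrightarrow> Dy n ` PVj m n A l j = Dset m n A l j"
  unfolding PVj_eq Dset_eq image_image symmetry_phases_def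
  by (intro image_cong refl Dy_symmetry_phases) (auto simp: symmetry_phases_def)

end

theorem lemma3p1:
  fixes m n l :: nat and A :: "nat list \<Rightarrow> real"
  assumes "m \<ge> 2" and "n \<ge> 1" and "l \<ge> 1"
    and "tensor_nonneg m n A"
    and "weakly_irreducible m n A"
    and "spectral_sym m n A l"
  shows "comm_group (PV_group m n A l)
    \<and> subgroup (PVj m n A l 0) (PV_group m n A l)
    \<and> (\<forall>j \<in> {1..l - 1}. PVj m n A l j \<in> rcosets\<^bsub>PV_group m n A l\<^esub> (PVj m n A l 0))
    \<and> Dy n \<in> iso (PV_group m n A l) (D_group m n A l)
    \<and> (\<forall>j < l. Dy n ` PVj m n A l j = Dset m n A l j)"
proof -
  interpret weakly_irreducible_tensor m n A
    using assms by unfold_locales auto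
  obtain v r where "perron_vector m n A v r"
    by (rule perron_vector_exists)
  then interpret spectrally_symmetric_perron m n A v r l
    using assms
    by (simp add: spectrally_symmetric_perron_def spectrally_symmetric_perron_axioms_def)
  have "\<forall>j \<in> {1..l - 1}. j < l" using assms(3) by auto
  then show ?thesis
    using comm_group_PV_group PVj_0_subgroup PVj_rcoset Dy_iso Dy_image_PVj by blast
qed

end
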